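(* Let $a_i=i-\tfrac12$ ($i\in\mathbb Z$) and $FS_\mu:=s_{\mu;a}$. For every Young diagram $(p_1,\dots,p_d\mid q_1,\dots,q_d)$ in Frobenius notation, $$FS_{(p_1,\dots,p_d\mid q_1,\dots,q_d)}=\sum_{\substack{p'_1\le p_1,\dots,p'_d\le p_d\\ q'_1\le q_1,\dots,q'_d\le q_d}}\det[c_{p_i,p'_j}]_{i,j=1}^d\,\det[c_{q_i,q'_j}]_{i,j=1}^d\,s_{(p'_1,\dots,p'_d\mid q'_1,\dots,q'_d)},$$ where $c_{pp'}=(-1)^{p-p'}e_{p-p'}(\tfrac12,\tfrac32,\dots,\tfrac{2p-1}2)$ for $p\ge p'$ (with $p$ arguments), $c_{pp'}=0$ for $p'>p$, and the sum is over tuples of nonnegative integers $p'_1>\dots>p'_d\ge0$, $q'_1>\dots>q'_d\ge0$ (so that the indices are Young diagrams in Frobenius notation).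
   Context: $\Lambda$ is the algebra of symmetric functions over $\mathbb C$ with complete homogeneous $h_k$, elementary $e_k$ and Schur functions $s_\mu$. For a sequence $a=(a_i)_{i\in\mathbb Z}$ define $h_{k;a}=\sum_{i=1}^k(-1)^{k-i}e_{k-i}(a_1,\dots,a_{k-1})h_i$ for $k\ge1$, $h_{0;a}=1$, $h_{k;a}=0$ for $k<0$; let $(\tau^ra)_i=a_{i+r}$; and set $s_{\mu;a}=\det[h_{\mu_i-i+j;\,\tau^{1-j}a}]_{i,j=1}^N$ for any $N\ge\ell(\mu)$. Frobenius notation: a diagram $\mu$ with $d$ diagonal boxes is $(p_1,\dots,p_d\mid q_1,\dots,q_d)$ with $p_i=\mu_i-i$, $q_i=\mu'_i-i$, $\mu'$ the transposed diagram. *)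

theory Defs
  imports Complex_Main "HOL-Library.Poly_Mapping" "HOL-Combinatorics.Permutations"
begin

(* The ring of symmetric functions over C, realised as the free polynomial algebra
  C[h_1, h_2, ...] on the complete homogeneous functions (fundamental theorem on symmetric
  functions). *)
type_synonym sym_fun = "(nat \<Rightarrow>\<^sub>0 nat) \<Rightarrow>\<^sub>0 complex"

definition lconst :: "complex \<Rightarrow> sym_fun" where
  "lconst c = Poly_Mapping.single 0 c"

definition hc :: "int \<Rightarrow> sym_fun" where
  "hc k = (if k < 0 then 0 else if k = 0 then 1
           else Poly_Mapping.single (Poly_Mapping.single (nat k) 1) 1)"

definition esym :: "nat \<Rightarrow> complex list \<Rightarrow> complex" where
  "esym m xs = (\<Sum>S\<in>{S. S \<subseteq> {..<length xs} \<and> card S = m}. \<Prod>i\<in>S. xs ! i)"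

definition detN :: "nat \<Rightarrow> (nat \<Rightarrow> nat \<Rightarrow> 'a::comm_ring_1) \<Rightarrow> 'a" where
  "detN N f = (\<Sum>\<sigma>\<in>{\<sigma>. \<sigma> permutes {..<N}}. of_int (sign \<sigma>) * (\<Prod>i<N. f i (\<sigma> i)))"

definition tau :: "int \<Rightarrow> (int \<Rightarrow> complex) \<Rightarrow> (int \<Rightarrow> complex)" where
  "tau r a = (\<lambda>i. a (i + r))"

definition hsh :: "(int \<Rightarrow> complex) \<Rightarrow> int \<Rightarrow> sym_fun" where
  "hsh a k = (if k < 0 then 0 else if k = 0 then 1 else
     (\<Sum>i\<in>{1..k}. lconst ((-1) ^ nat (k - i) * esym (nat (k - i)) (map a [1..k-1])) * hc i))"

(* s_{mu;a} = det[h_{mu_i - i + j; tau^{1-j} a}]_{i,j=1..N}; mu is given 1-indexed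
  as a function nat => nat (mu i = 0 for i beyond the length), N \<ge> length of mu. *)
definition schur_sh :: "(int \<Rightarrow> complex) \<Rightarrow> nat \<Rightarrow> (nat \<Rightarrow> nat) \<Rightarrow> sym_fun" where
  "schur_sh a N mu = detN N (\<lambda>i j. hsh (tau (1 - int (j+1)) a)
                        (int (mu (i+1)) - int (i+1) + int (j+1)))"

definition schur :: "nat \<Rightarrow> (nat \<Rightarrow> nat) \<Rightarrow> sym_fun" where
  "schur N mu = detN N (\<lambda>i j. hc (int (mu (i+1)) - int (i+1) + int (j+1)))"

definition frob_valid :: "nat list \<Rightarrow> nat list \<Rightarrow> bool" where
  "frob_valid p q \<longleftrightarrow> length p = length q \<and> sorted_wrt (>) p \<and> sorted_wrt (>) q"

definition frob_part :: "nat list \<Rightarrow> nat list \<Rightarrow> nat \<Rightarrow> nat" where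
  "frob_part p q i = (if 1 \<le> i \<and> i \<le> length p then p ! (i - 1) + i
     else card {j. 1 \<le> j \<and> j \<le> length q \<and> i \<le> q ! (j - 1) + j})"

(* number of rows of (p | q): mu'_1 = q_1 + 1 *)
definition frob_len :: "nat list \<Rightarrow> nat" where
  "frob_len q = (if q = [] then 0 else q ! 0 + 1)"

definition a_half :: "int \<Rightarrow> complex" where
  "a_half i = of_int i - 1/2"

definition FS :: "nat list \<Rightarrow> nat list \<Rightarrow> sym_fun" where
  "FS p q = schur_sh a_half (frob_len q) (frob_part p q)"

definition s_frob :: "nat list \<Rightarrow> nat list \<Rightarrow> sym_fun" where
  "s_frob p q = schur (frob_len q) (frob_part p q)"

definition ccoef :: "nat \<Rightarrow> nat \<Rightarrow> complex" where
  "ccoef p p' = (if p' \<le> p then (-1) ^ (p - p') *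
       esym (p - p') (map (\<lambda>k. of_nat k + 1/2) [0..<p]) else 0)"

end

(*
  Let A_m(t) = (1 - a_1 t) ... (1 - a_m t), extended to m < 0 by A_m = 1 / ((1 - a_(m+1) t) ... (1 - a_0 t)),
  and H(t) = sum_k h_k t^k.  Then h_(k; tau^(-j) a) is the coefficient of t^k in A_(k-j-1)(t) H(t) / A_(-j)(t),
  so after splitting off a unitriangular factor the i-th row of the matrix defining FS_mu becomes
  ([t^(rho_i + 1 + r)] A_(rho_i)(t) H(t))_r with rho_i = mu_i - i.  For the d rows with rho_i = p_i this is
  sum_x c_(p_i x) h_(x + 1 + r), a combination of rows of Jacobi-Trudi matrices; for the other rows
  rho_i = -1 - w, where w runs over the complement W of {q_1, ..., q_d} in [0, N), and the row is
  sum_k D_(w k) h_(r - k) with D upper unitriangular and D^(-1) = ((-1)^(k + l) c_(l k)).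
  Multiplying on the right by U^(-1) D^(-1), where U = (h_(r - k)), turns the rows indexed by W into unit
  vectors, so FS_mu is (-1)^(q_1 + ... + q_d) times a d x d minor.  Two applications of the Cauchy-Binet
  formula expand this minor, and the same reduction applied to s_(p'|q') with right factor U^(-1)
  identifies the inner minors with Schur functions; all signs cancel.
*)
theory Submission
  imports Defs "Jordan_Normal_Form.Determinant" "HOL-Computational_Algebra.Formal_Power_Series"
begin

section \<open>Determinants of matrices given as functions\<close>

lemma detN_0 [simp]: "detN 0 f = 1"
  by (simp add: detN_def)

lemma detN_eq_det: "detN N f = det (mat N N (\<lambda>(i, j). f i j))"
  by (subst det_def'[of _ N]) (auto simp: detN_def atLeast0LessThan)

lemma detN_cong:
  assumes "\<And>i j. i < N \<Longrightarrow> j < N \<Longrightarrow> f i j = g i j"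
  shows "detN N f = detN N g"
proof -
  have "mat N N (\<lambda>(i, j). f i j) = mat N N (\<lambda>(i, j). g i j)"
    by (rule eq_matI) (auto simp: assms)
  then show ?thesis by (simp add: detN_eq_det)
qed

lemma detN_transpose: "detN N (\<lambda>i j. f j i) = detN N f"
proof -
  have "mat N N (\<lambda>(i, j). f j i) = transpose_mat (mat N N (\<lambda>(i, j). f i j))"
    by (rule eq_matI) auto
  then show ?thesis
    by (simp add: detN_eq_det det_transpose[OF mat_carrier])
qed

lemma detN_identical_rows:
  assumes "i \<noteq> k" "i < N" "k < N" "\<And>j. j < N \<Longrightarrow> f i j = f k j"
  shows "detN N f = 0"
proof -
  have "row (mat N N (\<lambda>(i, j). f i j)) i = row (mat N N (\<lambda>(i, j). f i j)) k"
    by (rule eq_vecI) (simp_all add: assms(2-4))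
  then show ?thesis
    unfolding detN_eq_det by (intro det_identical_rows[OF _ assms(1-3)]) simp_all
qed

lemma detN_permute_rows:
  assumes "\<pi> permutes {..<N}"
  shows "detN N (\<lambda>i j. f (\<pi> i) j) = of_int (sign \<pi>) * detN N f"
proof -
  have \<pi>: "\<pi> permutes {0..<N}" using assms by (simp add: atLeast0LessThan)
  have "\<pi> i < N" if "i < N" for i
    using permutes_in_image[OF \<pi>] that by simp
  then have "mat N N (\<lambda>(i, j). f (\<pi> i) j) = mat N N (\<lambda>(i, j). mat N N (\<lambda>(i, j). f i j) $$ (\<pi> i, j))"
    by (intro eq_matI) simp_all
  then show ?thesis
    using det_permute_rows[OF mat_carrier \<pi>, of "\<lambda>(i, j). f i j"] by (simp add: detN_eq_det)
qed

lemma detN_upper_unitriangular: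
  assumes "\<And>i j. j < i \<Longrightarrow> i < N \<Longrightarrow> f i j = 0" "\<And>i. i < N \<Longrightarrow> f i i = 1"
  shows "detN N f = 1"
proof -
  have "upper_triangular (mat N N (\<lambda>(i, j). f i j))"
    unfolding upper_triangular_def using assms(1) by simp
  then have "detN N f = prod_list (diag_mat (mat N N (\<lambda>(i, j). f i j)))"
    by (simp add: detN_eq_det det_upper_triangular[OF _ mat_carrier])
  also have "\<dots> = 1"
    by (simp add: prod_list_diag_prod assms(2))
  finally show ?thesis .
qed

lemma detN_identity: "detN N (\<lambda>i j. if i = j then 1 else 0) = 1"
  by (rule detN_upper_unitriangular) auto

lemma detN_zero_block:
  assumes "k < d" and "\<And>a b. k \<le> a \<Longrightarrow> a < d \<Longrightarrow> b \<le> k \<Longrightarrow> f a b = 0"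
  shows "detN d f = 0"
  unfolding detN_def
proof (intro sum.neutral ballI)
  fix \<sigma> assume "\<sigma> \<in> {\<sigma>. \<sigma> permutes {..<d}}"
  then have \<sigma>: "\<sigma> permutes {..<d}" by simp
  \<comment> \<open>the \<open>d - k\<close> rows \<open>k..<d\<close> cannot all be sent into the \<open>d - k - 1\<close> columns \<open>Suc k..<d\<close>\<close>
  have "\<not> \<sigma> ` {k..<d} \<subseteq> {Suc k..<d}"
  proof
    assume "\<sigma> ` {k..<d} \<subseteq> {Suc k..<d}"
    moreover have "inj_on \<sigma> {k..<d}"
      using permutes_inj[OF \<sigma>] by (auto intro: inj_on_subset)
    ultimately have "card {k..<d} \<le> card {Suc k..<d}"
      by (intro card_inj_on_le) auto
    then show False using assms(1) by simp
  qed
  then obtain a where "k \<le> a" "a < d" "\<sigma> a \<le> k"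
    using permutes_in_image[OF \<sigma>] by force
  then have "(\<Prod>i<d. f i (\<sigma> i)) = 0"
    by (intro prod_zero) (use assms(2) in auto)
  then show "of_int (sign \<sigma>) * (\<Prod>i<d. f i (\<sigma> i)) = 0" by simp
qed

lemma detN_scale:
  "detN d (\<lambda>i j. u i * v j * f i j) = (\<Prod>i<d. u i) * (\<Prod>j<d. v j) * detN d f"
  unfolding detN_def sum_distrib_left
proof (rule sum.cong[OF refl])
  fix \<sigma> assume "\<sigma> \<in> {\<sigma>. \<sigma> permutes {..<d}}"
  then have "(\<Prod>i<d. v (\<sigma> i)) = (\<Prod>j<d. v j)"
    using prod.permute[of \<sigma> "{..<d}" v] by (simp add: comp_def)
  then show "of_int (sign \<sigma>) * (\<Prod>i<d. u i * v (\<sigma> i) * f i (\<sigma> i)) =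
      (\<Prod>i<d. u i) * (\<Prod>j<d. v j) * (of_int (sign \<sigma>) * (\<Prod>i<d. f i (\<sigma> i)))"
    by (simp add: prod.distrib mult_ac)
qed

lemma (in comm_ring_hom) hom_detN: "hom (detN N f) = detN N (\<lambda>i j. hom (f i j))"
  unfolding detN_def by (simp add: hom_distribs)

definition mmult :: "nat \<Rightarrow> (nat \<Rightarrow> nat \<Rightarrow> 'a) \<Rightarrow> (nat \<Rightarrow> nat \<Rightarrow> 'a) \<Rightarrow> nat \<Rightarrow> nat \<Rightarrow> 'a::comm_semiring_1"
  where "mmult N f g i j = (\<Sum>k<N. f i k * g k j)"

lemma mat_mmult: "mat N N (\<lambda>(i, j). mmult N f g i j) = mat N N (\<lambda>(i, j). f i j) * mat N N (\<lambda>(i, j). g i j)"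
  by (rule eq_matI) (auto simp: mmult_def scalar_prod_def atLeast0LessThan intro!: sum.cong)

lemma detN_mmult: "detN N (mmult N f g) = detN N f * detN N g"
  by (simp add: detN_eq_det mat_mmult det_mult[of _ N])

lemma mmult_assoc: "mmult N (mmult N f g) h = mmult N f (mmult N g h)"
proof (intro ext)
  fix i j
  have "mmult N (mmult N f g) h i j = (\<Sum>k<N. \<Sum>l<N. f i l * g l k * h k j)"
    by (simp add: mmult_def sum_distrib_right)
  also have "\<dots> = (\<Sum>l<N. \<Sum>k<N. f i l * g l k * h k j)"
    by (rule sum.swap)
  also have "\<dots> = mmult N f (mmult N g h) i j"
    by (simp add: mmult_def sum_distrib_left mult.assoc)
  finally show "mmult N (mmult N f g) h i j = mmult N f (mmult N g h) i j" .
qed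

lemma mmult_row_comb:
  assumes "\<And>r. r < N \<Longrightarrow> f i r = (\<Sum>x\<in>A. c x * g x r)"
  shows "mmult N f h i l = (\<Sum>x\<in>A. c x * mmult N g h x l)"
proof -
  have "mmult N f h i l = (\<Sum>r<N. \<Sum>x\<in>A. c x * g x r * h r l)"
    unfolding mmult_def by (rule sum.cong) (simp_all add: assms sum_distrib_right)
  also have "\<dots> = (\<Sum>x\<in>A. \<Sum>r<N. c x * g x r * h r l)"
    by (rule sum.swap)
  also have "\<dots> = (\<Sum>x\<in>A. c x * mmult N g h x l)"
    by (simp add: mmult_def sum_distrib_left mult.assoc)
  finally show ?thesis .
qed

lemma mmult_inverse_cancel:
  assumes "\<And>i j. i < N \<Longrightarrow> j < N \<Longrightarrow> mmult N f g i j = (if i = j then 1 else 0)" and "k < N"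
  shows "mmult N f (mmult N g h) k l = h k l"
proof -
  have "mmult N f (mmult N g h) k l = (\<Sum>c<N. mmult N f g k c * h c l)"
    by (simp add: mmult_assoc[symmetric] mmult_def[of N "mmult N f g"])
  also have "\<dots> = (\<Sum>c<N. if k = c then h c l else 0)"
    using assms by (intro sum.cong) auto
  also have "\<dots> = h k l"
    using assms(2) by simp
  finally show ?thesis .
qed

lemma detN_right_inverse:
  assumes "detN N f = 1"
  obtains g where "\<And>i j. i < N \<Longrightarrow> j < N \<Longrightarrow> mmult N f g i j = (if i = j then 1 else 0)"
proof -
  let ?A = "mat N N (\<lambda>(i, j). f i j)"
  have "?A * adj_mat ?A = det ?A \<cdot>\<^sub>m 1\<^sub>m N"
    by (rule adj_mat(2)[OF mat_carrier])
  also have "\<dots> = 1\<^sub>m N"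
    using assms by (intro eq_matI) (auto simp: detN_eq_det)
  finally have "?A * adj_mat ?A = 1\<^sub>m N" .
  then have "mmult N f (\<lambda>k j. adj_mat ?A $$ (k, j)) i j = (if i = j then 1 else 0)"
    if "i < N" "j < N" for i j
    using that adj_mat(1)[OF mat_carrier, of N "\<lambda>(i, j). f i j"]
    by (auto simp: mmult_def scalar_prod_def atLeast0LessThan dest!: arg_cong[where f = "\<lambda>M. M $$ (i, j)"])
  then show ?thesis using that by blast
qed

lemma detN_right_inverse_eq_1:
  assumes "detN N f = 1" and "\<And>i j. i < N \<Longrightarrow> j < N \<Longrightarrow> mmult N f g i j = (if i = j then 1 else 0)"
  shows "detN N g = 1"
proof -
  have "detN N f * detN N g = 1"
    using assms(2) by (simp add: detN_mmult[symmetric] detN_identity cong: detN_cong)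
  then show ?thesis
    using assms(1) by simp
qed

section \<open>The Cauchy--Binet formula\<close>

lemma detN_sum_rows:
  assumes "finite S"
  shows "detN N (\<lambda>i j. \<Sum>x\<in>S. A i x * B x j) =
    (\<Sum>h\<in>{h \<in> {..<N} \<rightarrow>\<^sub>E S. inj_on h {..<N}}. (\<Prod>i<N. A i (h i)) * detN N (\<lambda>i j. B (h i) j))"
proof -
  let ?F = "\<lambda>h. (\<Prod>i<N. A i (h i)) * detN N (\<lambda>i j. B (h i) j)"
  have "detN N (\<lambda>i j. \<Sum>x\<in>S. A i x * B x j) =
     (\<Sum>\<sigma>\<in>{\<sigma>. \<sigma> permutes {..<N}}. of_int (sign \<sigma>) *
        (\<Sum>h\<in>{..<N} \<rightarrow>\<^sub>E S. \<Prod>i<N. A i (h i) * B (h i) (\<sigma> i)))"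
    unfolding detN_def by (simp add: prod_sum_PiE assms)
  also have "\<dots> = (\<Sum>h\<in>{..<N} \<rightarrow>\<^sub>E S. \<Sum>\<sigma>\<in>{\<sigma>. \<sigma> permutes {..<N}}.
        (\<Prod>i<N. A i (h i)) * (of_int (sign \<sigma>) * (\<Prod>i<N. B (h i) (\<sigma> i))))"
    by (subst sum.swap) (simp add: sum_distrib_left prod.distrib mult_ac)
  also have "\<dots> = (\<Sum>h\<in>{..<N} \<rightarrow>\<^sub>E S. ?F h)"
    by (simp add: detN_def sum_distrib_left)
  also have "\<dots> = (\<Sum>h\<in>{h \<in> {..<N} \<rightarrow>\<^sub>E S. inj_on h {..<N}}. ?F h)"
  proof (rule sum.mono_neutral_right)
    show "\<forall>h\<in>({..<N} \<rightarrow>\<^sub>E S) - {h \<in> {..<N} \<rightarrow>\<^sub>E S. inj_on h {..<N}}. ?F h = 0"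
    proof
      fix h assume "h \<in> ({..<N} \<rightarrow>\<^sub>E S) - {h \<in> {..<N} \<rightarrow>\<^sub>E S. inj_on h {..<N}}"
      then obtain i k where "i < N" "k < N" "i \<noteq> k" "h i = h k"
        unfolding inj_on_def by auto
      then have "detN N (\<lambda>i j. B (h i) j) = 0"
        by (intro detN_identical_rows[of i k]) simp_all
      then show "?F h = 0" by simp
    qed
  qed (use assms in \<open>auto simp: finite_PiE\<close>)
  finally show ?thesis .
qed

definition dec_lists :: "'a::linorder set \<Rightarrow> nat \<Rightarrow> 'a list set" where
  "dec_lists S d = {xs. length xs = d \<and> sorted_wrt (>) xs \<and> set xs \<subseteq> S}"

lemma finite_dec_lists: "finite S \<Longrightarrow> finite (dec_lists S d)"
  by (rule finite_subset[OF _ finite_lists_length_eq[of S d]]) (auto simp: dec_lists_def)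

lemma sorted_gt_distinct: "sorted_wrt (>) (xs::'a::linorder list) \<Longrightarrow> distinct xs"
  by (induction xs) auto

lemma sorted_list_of_set_sorted_gt:
  assumes "sorted_wrt (>) (xs::'a::linorder list)"
  shows "sorted_list_of_set (set xs) = rev xs"
proof -
  have "sorted (rev xs)"
    unfolding sorted_wrt_rev by (rule sorted_wrt_mono_rel[OF _ assms]) simp
  then show ?thesis
    using sorted_list_of_set.idem_if_sorted_distinct[of "rev xs"] sorted_gt_distinct[OF assms] by simp
qed

lemma image_nth_permutes:
  assumes "length xs = d" "\<pi> permutes {..<d}"
  shows "(\<lambda>i. xs ! \<pi> i) ` {..<d} = set xs"
proof -
  have "(\<lambda>i. xs ! \<pi> i) ` {..<d} = (!) xs ` \<pi> ` {..<d}"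
    by (simp add: image_image)
  also have "\<dots> = set xs"
    using assms by (auto simp: permutes_image in_set_conv_nth)
  finally show ?thesis .
qed

lemma inj_on_dec_lists_permutes:
  "inj_on (\<lambda>(xs, \<pi>). restrict (\<lambda>i. xs ! \<pi> i) {..<d}) (dec_lists S d \<times> {\<pi>. \<pi> permutes {..<d}})"
  (is "inj_on ?\<Phi> ?A")
proof (rule inj_onI)
  fix z z' assume A: "z \<in> ?A" "z' \<in> ?A" and \<Phi>: "?\<Phi> z = ?\<Phi> z'"
  obtain xs \<pi> ys \<rho> where z: "z = (xs, \<pi>)" "z' = (ys, \<rho>)"
    by (cases z, cases z') simp
  have xs: "length xs = d" "sorted_wrt (>) xs" and \<pi>: "\<pi> permutes {..<d}"
    and ys: "length ys = d" "sorted_wrt (>) ys" and \<rho>: "\<rho> permutes {..<d}"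
    using A by (simp_all add: z dec_lists_def)
  have eq: "xs ! \<pi> i = ys ! \<rho> i" if "i < d" for i
    using fun_cong[OF \<Phi>, of i] that by (simp add: z)
  have "set xs = (\<lambda>i. xs ! \<pi> i) ` {..<d}"
    by (rule image_nth_permutes[OF xs(1) \<pi>, symmetric])
  also have "\<dots> = (\<lambda>i. ys ! \<rho> i) ` {..<d}"
    using eq by (intro image_cong) auto
  also have "\<dots> = set ys"
    by (rule image_nth_permutes[OF ys(1) \<rho>])
  finally have "rev xs = rev ys"
    using sorted_list_of_set_sorted_gt[OF xs(2)] sorted_list_of_set_sorted_gt[OF ys(2)] by metis
  then have "xs = ys"
    by simp
  moreover have "\<pi> i = \<rho> i" for i
  proof (cases "i < d")
    case True
    then have "\<pi> i < d" "\<rho> i < d"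
      using permutes_in_image[OF \<pi>] permutes_in_image[OF \<rho>] by auto
    then show ?thesis
      using eq[OF True] \<open>xs = ys\<close> nth_eq_iff_index_eq[OF sorted_gt_distinct[OF xs(2)]] xs(1) by simp
  next
    case False
    then show ?thesis
      using permutes_not_in[OF \<pi>] permutes_not_in[OF \<rho>] by simp
  qed
  ultimately show "z = z'"
    using z by auto
qed

lemma restrict_permuted_dec_list:
  assumes "xs \<in> dec_lists S d" "\<pi> permutes {..<d}"
  shows "restrict (\<lambda>i. xs ! \<pi> i) {..<d} \<in> {h \<in> {..<d} \<rightarrow>\<^sub>E S. inj_on h {..<d}}"
proof -
  have xs: "length xs = d" "sorted_wrt (>) xs" "set xs \<subseteq> S"
    using assms(1) by (simp_all add: dec_lists_def)
  have \<pi>d: "\<pi> i < d" if "i < d" for i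
    using permutes_in_image[OF assms(2)] that by simp
  have "inj_on (\<lambda>i. xs ! \<pi> i) {..<d}"
  proof (rule inj_onI)
    fix i k assume "i \<in> {..<d}" "k \<in> {..<d}" "xs ! \<pi> i = xs ! \<pi> k"
    then have "\<pi> i = \<pi> k"
      using nth_eq_iff_index_eq[OF sorted_gt_distinct[OF xs(2)]] xs(1) \<pi>d by simp
    then show "i = k"
      using permutes_inj[OF assms(2)] by (simp add: inj_eq)
  qed
  moreover have "xs ! \<pi> i \<in> S" if "i < d" for i
    using xs \<pi>d[OF that] nth_mem[of "\<pi> i" xs] by auto
  ultimately show ?thesis
    by auto
qed

lemma inj_factor_dec_list_permutes:
  assumes "h \<in> {..<d} \<rightarrow>\<^sub>E S" "inj_on h {..<d}"
  obtains xs \<pi> where "xs \<in> dec_lists S d" "\<pi> permutes {..<d}" "h = restrict (\<lambda>i. xs ! \<pi> i) {..<d}"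
proof -
  define xs where "xs = rev (sorted_list_of_set (h ` {..<d}))"
  have set_xs: "set xs = h ` {..<d}" and xs2: "sorted_wrt (>) xs"
    by (simp_all add: xs_def sorted_wrt_rev)
  have xs1: "length xs = d"
    using assms(2) card_image[of h "{..<d}"] by (simp add: xs_def)
  have bn: "bij_betw (nth xs) {..<d} (h ` {..<d})"
    using bij_betw_nth[OF sorted_gt_distinct[OF xs2]] xs1 set_xs by (simp add: lessThan_atLeast0)
  define \<pi> where "\<pi> = (\<lambda>i. if i < d then the_inv_into {..<d} (nth xs) (h i) else i)"
  have "bij_betw (the_inv_into {..<d} (nth xs) \<circ> h) {..<d} {..<d}"
    using assms(2) by (intro bij_betw_trans[OF _ bij_betw_the_inv_into[OF bn]]) (simp add: bij_betw_def)
  then have "bij_betw \<pi> {..<d} {..<d}"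
    by (rule bij_betw_cong[THEN iffD1, rotated]) (simp add: \<pi>_def)
  then have \<pi>: "\<pi> permutes {..<d}"
    by (rule bij_imp_permutes) (simp add: \<pi>_def)
  have "xs ! \<pi> i = h i" if "i < d" for i
    using that f_the_inv_into_f_bij_betw[OF bn] by (simp add: \<pi>_def)
  then have "h = restrict (\<lambda>i. xs ! \<pi> i) {..<d}"
    using assms(1) by (auto simp: PiE_def extensional_def)
  moreover have "xs \<in> dec_lists S d"
    using xs1 xs2 set_xs assms(1) by (auto simp: dec_lists_def)
  ultimately show ?thesis
    using that \<pi> by blast
qed

lemma bij_betw_dec_lists_permutes:
  "bij_betw (\<lambda>(xs, \<pi>). restrict (\<lambda>i. xs ! \<pi> i) {..<d})
     (dec_lists S d \<times> {\<pi>. \<pi> permutes {..<d}}) {h \<in> {..<d} \<rightarrow>\<^sub>E S. inj_on h {..<d}}"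
proof (rule bij_betw_imageI[OF inj_on_dec_lists_permutes], intro equalityI subsetI)
  fix h assume "h \<in> (\<lambda>(xs, \<pi>). restrict (\<lambda>i. xs ! \<pi> i) {..<d}) ` (dec_lists S d \<times> {\<pi>. \<pi> permutes {..<d}})"
  then obtain xs \<pi> where "xs \<in> dec_lists S d" "\<pi> permutes {..<d}" "h = restrict (\<lambda>i. xs ! \<pi> i) {..<d}"
    by auto
  then show "h \<in> {h \<in> {..<d} \<rightarrow>\<^sub>E S. inj_on h {..<d}}"
    using restrict_permuted_dec_list by simp
next
  fix h assume "h \<in> {h \<in> {..<d} \<rightarrow>\<^sub>E S. inj_on h {..<d}}"
  then obtain xs \<pi> where "xs \<in> dec_lists S d" "\<pi> permutes {..<d}" "h = restrict (\<lambda>i. xs ! \<pi> i) {..<d}"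
    by (auto elim: inj_factor_dec_list_permutes)
  then show "h \<in> (\<lambda>(xs, \<pi>). restrict (\<lambda>i. xs ! \<pi> i) {..<d}) ` (dec_lists S d \<times> {\<pi>. \<pi> permutes {..<d}})"
    by auto
qed

lemma detN_Cauchy_Binet:
  assumes "finite S"
  shows "detN d (\<lambda>i j. \<Sum>x\<in>S. A i x * B x j) =
    (\<Sum>xs\<in>dec_lists S d. detN d (\<lambda>i j. A i (xs ! j)) * detN d (\<lambda>i j. B (xs ! i) j))"
proof -
  let ?F = "\<lambda>h. (\<Prod>i<d. A i (h i)) * detN d (\<lambda>i j. B (h i) j)"
  have "detN d (\<lambda>i j. \<Sum>x\<in>S. A i x * B x j) = (\<Sum>h\<in>{h \<in> {..<d} \<rightarrow>\<^sub>E S. inj_on h {..<d}}. ?F h)"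
    by (rule detN_sum_rows[OF assms])
  also have "\<dots> = (\<Sum>(xs, \<pi>)\<in>dec_lists S d \<times> {\<pi>. \<pi> permutes {..<d}}.
      ?F (restrict (\<lambda>i. xs ! \<pi> i) {..<d}))"
    using sum.reindex_bij_betw[OF bij_betw_dec_lists_permutes[of d S], of ?F]
    by (simp add: case_prod_unfold)
  also have "\<dots> = (\<Sum>xs\<in>dec_lists S d. \<Sum>\<pi>\<in>{\<pi>. \<pi> permutes {..<d}}.
      of_int (sign \<pi>) * (\<Prod>i<d. A i (xs ! \<pi> i)) * detN d (\<lambda>i j. B (xs ! i) j))"
    unfolding sum.cartesian_product[symmetric]
  proof (intro sum.cong refl)
    fix xs \<pi> assume "\<pi> \<in> {\<pi>. \<pi> permutes {..<d}}"
    then have "detN d (\<lambda>i j. B (xs ! \<pi> i) j) = of_int (sign \<pi>) * detN d (\<lambda>i j. B (xs ! i) j)"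
      by (intro detN_permute_rows[of _ _ "\<lambda>i j. B (xs ! i) j"]) simp
    moreover have "detN d (\<lambda>i j. B (restrict (\<lambda>i. xs ! \<pi> i) {..<d} i) j) = detN d (\<lambda>i j. B (xs ! \<pi> i) j)"
      by (rule detN_cong) simp
    ultimately show "?F (restrict (\<lambda>i. xs ! \<pi> i) {..<d}) =
        of_int (sign \<pi>) * (\<Prod>i<d. A i (xs ! \<pi> i)) * detN d (\<lambda>i j. B (xs ! i) j)"
      by simp
  qed
  also have "\<dots> = (\<Sum>xs\<in>dec_lists S d. detN d (\<lambda>i j. A i (xs ! j)) * detN d (\<lambda>i j. B (xs ! i) j))"
    by (simp add: detN_def sum_distrib_right)
  finally show ?thesis .
qed

section \<open>Expansion along rows of unit vectors\<close>

lemma detN_last_row_unit: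
  assumes "w \<le> n" and "\<And>j. j \<le> n \<Longrightarrow> f n j = (if j = w then 1 else 0)"
  shows "detN (Suc n) f = (-1) ^ (n + w) * detN n (\<lambda>i j. f i (if j < w then j else Suc j))"
proof -
  let ?A = "mat (Suc n) (Suc n) (\<lambda>(i, j). f i j)"
  have "det ?A = (\<Sum>j<Suc n. ?A $$ (n, j) * cofactor ?A n j)"
    by (rule laplace_expansion_row[OF mat_carrier]) simp
  also have "\<dots> = (\<Sum>j<Suc n. if j = w then cofactor ?A n j else 0)"
    using assms(2) by (intro sum.cong) auto
  also have "\<dots> = (-1) ^ (n + w) * det (mat_delete ?A n w)"
    using assms(1) by (simp add: cofactor_def)
  also have "mat_delete ?A n w = mat n n (\<lambda>(i, j). f i (if j < w then j else Suc j))"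
    by (rule eq_matI) (auto simp: mat_delete_def)
  finally show ?thesis
    by (simp add: detN_eq_det)
qed

lemma detN_anti_identity: "detN d (\<lambda>i j. if i + j + 1 = d then 1 else 0) = (-1) ^ (\<Sum>i<d. i)"
proof (induction d)
  case (Suc n)
  let ?J = "\<lambda>d i j. if i + j + 1 = d then 1 else (0::'a)"
  have "detN (Suc n) (?J (Suc n)) = (-1) ^ (n + 0) * detN n (\<lambda>i j. ?J (Suc n) i (if j < 0 then j else Suc j))"
    by (rule detN_last_row_unit) auto
  also have "detN n (\<lambda>i j. ?J (Suc n) i (if j < 0 then j else Suc j)) = detN n (?J n)"
    by (rule detN_cong) auto
  also have "\<dots> = (-1) ^ (\<Sum>i<n. i)"
    by (rule Suc.IH)
  also have "(-1) ^ (n + 0) * (-1) ^ (\<Sum>i<n. i) = ((-1::'a) ^ (\<Sum>i<Suc n. i))"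
    by (simp add: power_add)
  finally show ?case .
qed simp

lemma detN_rev_cols: "detN d (\<lambda>i j. f i (d - 1 - j)) = (-1) ^ (\<Sum>i<d. i) * detN d f"
proof -
  have "detN d (\<lambda>i j. f i (d - 1 - j)) = detN d (mmult d f (\<lambda>i j. if i + j + 1 = d then 1 else 0))"
  proof (rule detN_cong)
    fix i j assume "j < d"
    then have "(\<Sum>k<d. f i k * (if k + j + 1 = d then 1 else 0)) = (\<Sum>k<d. if k = d - 1 - j then f i k else 0)"
      by (intro sum.cong) auto
    then show "f i (d - 1 - j) = mmult d f (\<lambda>i j. if i + j + 1 = d then 1 else 0) i j"
      using \<open>j < d\<close> by (simp add: mmult_def)
  qed
  then show ?thesis
    by (simp only: detN_mmult detN_anti_identity mult.commute)
qed

lemma sorted_list_of_set_insert_column: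
  assumes "sorted_wrt (<) (ws @ [w])" and "set (ws @ [w]) \<subseteq> {..<Suc n}"
  shows "sorted_list_of_set ({..<Suc n} - set (ws @ [w])) =
         map (\<lambda>j. if j < w then j else Suc j) (sorted_list_of_set ({..<n} - set ws))"
proof -
  let ?ins = "\<lambda>j::nat. if j < w then j else Suc j"
  have wsw: "\<forall>x\<in>set ws. x < w" and "w \<le> n"
    using assms by (auto simp: sorted_wrt_append)
  have "z \<in> ?ins ` ({..<n} - set ws)" if "z \<in> {..<Suc n} - set (ws @ [w])" for z
  proof (cases "z < w")
    case True
    then show ?thesis using that \<open>w \<le> n\<close> by (auto intro!: image_eqI[of _ _ z])
  next
    case False
    then show ?thesis using that wsw by (auto intro!: image_eqI[of _ _ "z - 1"])
  qed
  then have "?ins ` ({..<n} - set ws) = {..<Suc n} - set (ws @ [w])"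
    using wsw by (auto split: if_splits)
  moreover have "sorted_wrt (<) (map ?ins (sorted_list_of_set ({..<n} - set ws)))"
    unfolding sorted_wrt_map by (rule sorted_wrt_mono_rel[OF _ strict_sorted_list_of_set]) auto
  ultimately show ?thesis
    by (intro sorted_distinct_set_unique) (simp_all add: strict_sorted_iff)
qed

lemma detN_unit_rows:
  assumes "sorted_wrt (<) ws" "length ws + d = N" "set ws \<subseteq> {..<N}"
    and "\<And>i j. d \<le> i \<Longrightarrow> i < N \<Longrightarrow> j < N \<Longrightarrow> f i j = (if j = ws ! (i - d) then 1 else 0)"
  shows "detN N f = (-1) ^ (sum_list ws + (\<Sum>i\<in>{d..<N}. i)) *
      detN d (\<lambda>i j. f i (sorted_list_of_set ({..<N} - set ws) ! j))"
  using assms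
proof (induction ws arbitrary: N f rule: rev_induct)
  case Nil
  then show ?case
    by (auto simp: lessThan_atLeast0 intro: detN_cong)
next
  case (snoc w ws)
  define n where "n = length ws + d"
  let ?ins = "\<lambda>j. if j < w then j else Suc j"
  have N: "N = Suc n" and "w \<le> n" and wsw: "\<forall>x\<in>set ws. x < w"
    using snoc.prems(1-3) by (auto simp: n_def sorted_wrt_append)
  have "detN N f = (-1) ^ (n + w) * detN n (\<lambda>i j. f i (?ins j))"
    unfolding N using snoc.prems(4)[of n] \<open>w \<le> n\<close> N
    by (intro detN_last_row_unit) (auto simp: n_def nth_append)
  also have "detN n (\<lambda>i j. f i (?ins j)) = (-1) ^ (sum_list ws + (\<Sum>i\<in>{d..<n}. i)) *
      detN d (\<lambda>i j. f i (?ins (sorted_list_of_set ({..<n} - set ws) ! j)))"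
  proof (rule snoc.IH)
    show "sorted_wrt (<) ws" using snoc.prems(1) by (simp add: sorted_wrt_append)
    show "set ws \<subseteq> {..<n}" using wsw \<open>w \<le> n\<close> by auto
    fix i j assume "d \<le> i" "i < n" "j < n"
    moreover have "ws ! (i - d) < w"
      using wsw \<open>i < n\<close> \<open>d \<le> i\<close> by (simp add: n_def)
    ultimately show "f i (?ins j) = (if j = ws ! (i - d) then 1 else 0)"
      using snoc.prems(4)[of i "?ins j"] N by (auto simp: n_def nth_append)
  qed (simp add: n_def)
  also have "detN d (\<lambda>i j. f i (?ins (sorted_list_of_set ({..<n} - set ws) ! j))) =
      detN d (\<lambda>i j. f i (sorted_list_of_set ({..<N} - set (ws @ [w])) ! j))"
  proof -
    have "card ({..<n} - set ws) = d"
      using wsw \<open>w \<le> n\<close> sorted_wrt_append[of "(<)" ws "[w]"] snoc.prems(1)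
      by (subst card_Diff_subset) (auto simp: n_def strict_sorted_iff distinct_card)
    then show ?thesis
      unfolding N using sorted_list_of_set_insert_column[OF snoc.prems(1)] snoc.prems(3) N
      by (intro detN_cong) simp
  qed
  finally show ?case
    using N by (simp add: n_def power_add mult_ac)
qed

lemma minus_one_power_eq_if_even_sum:
  assumes "a + b = 2 * m"
  shows "(-1::'a::ring_1) ^ a = (-1) ^ b"
proof -
  have "even a \<longleftrightarrow> even b"
    using assms by (metis even_add dvd_triv_left)
  then show ?thesis
    by (simp add: minus_one_power_iff)
qed

lemma sum_list_complement:
  assumes "distinct (q::nat list)" "set q \<subseteq> {..<N}"
  shows "sum_list (sorted_list_of_set ({..<N} - set q)) + sum_list q = (\<Sum>i<N. i)"
proof -
  have "sum_list (sorted_list_of_set ({..<N} - set q)) + sum_list q = (\<Sum>x\<in>{..<N} - set q. x) + (\<Sum>x\<in>set q. x)"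
    using assms(1) by (simp add: distinct_sum_list_conv_Sum)
  also have "\<dots> = (\<Sum>i<N. i)"
    using assms(2) by (simp add: sum.subset_diff[symmetric])
  finally show ?thesis .
qed

text \<open>Expanding the unit rows contributes \<open>(-1) ^ (sum_list ws + \<Sum>{d..<N})\<close>, where \<open>ws\<close> lists the
  complement of \<open>q\<close>, and reversing \<open>q\<close> contributes \<open>(-1) ^ \<Sum>{..<d}\<close>; as
  \<open>sum_list ws + sum_list q = \<Sum>{..<N}\<close>, the product is \<open>(-1) ^ sum_list q\<close>.\<close>

lemma detN_unit_rows_sorted_gt:
  fixes q :: "nat list"
  assumes "sorted_wrt (>) q" "length q = d" "set q \<subseteq> {..<N}"
    and "\<And>i j. d \<le> i \<Longrightarrow> i < N \<Longrightarrow> j < N \<Longrightarrow>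
      f i j = (if j = sorted_list_of_set ({..<N} - set q) ! (i - d) then 1 else 0)"
  shows "detN N f = (-1) ^ sum_list q * detN d (\<lambda>i j. f i (q ! j))"
proof -
  define ws where "ws = sorted_list_of_set ({..<N} - set q)"
  have dq: "distinct q" using assms(1) by (rule sorted_gt_distinct)
  have "{..<N} - set ws = set q" using assms(3) by (auto simp: ws_def)
  then have cols: "sorted_list_of_set ({..<N} - set ws) = rev q"
    using sorted_list_of_set_sorted_gt[OF assms(1)] by simp
  have "d \<le> N"
    using card_mono[OF _ assms(3)] distinct_card[OF dq] assms(2) by fastforce
  then have "length ws + d = N"
    using assms(2,3) dq by (simp add: ws_def card_Diff_subset distinct_card)
  then have "detN N f = (-1) ^ (sum_list ws + (\<Sum>i\<in>{d..<N}. i)) * detN d (\<lambda>i j. f i (rev q ! j))"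
    unfolding cols[symmetric] using assms(4) by (intro detN_unit_rows) (auto simp: ws_def)
  also have "detN d (\<lambda>i j. f i (rev q ! j)) = detN d (\<lambda>i j. f i (q ! (d - 1 - j)))"
    using assms(2) by (intro detN_cong) (simp add: rev_nth)
  also have "\<dots> = (-1) ^ (\<Sum>i<d. i) * detN d (\<lambda>i j. f i (q ! j))"
    by (rule detN_rev_cols)
  finally have minor: "detN N f = (-1) ^ (sum_list ws + (\<Sum>i\<in>{d..<N}. i) + (\<Sum>i<d. i)) * detN d (\<lambda>i j. f i (q ! j))"
    by (simp add: power_add)
  have "sum_list ws + (\<Sum>i\<in>{d..<N}. i) + (\<Sum>i<d. i) + sum_list q = 2 * (\<Sum>i<N. i)"
    using sum_list_complement[OF dq assms(3)] \<open>length ws + d = N\<close>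
      sum.atLeastLessThan_concat[of 0 d N "\<lambda>i. i"] by (simp add: ws_def lessThan_atLeast0)
  then have "(-1::'a) ^ (sum_list ws + (\<Sum>i\<in>{d..<N}. i) + (\<Sum>i<d. i)) = (-1) ^ sum_list q"
    by (rule minus_one_power_eq_if_even_sum)
  with minor show ?thesis
    by (simp only:)
qed

lemma detN_reduce_unit_rows:
  fixes q :: "nat list"
  assumes "sorted_wrt (>) q" "length q = d" "set q \<subseteq> {..<N}" "detN N Y = 1"
    and "\<And>i l. d \<le> i \<Longrightarrow> i < N \<Longrightarrow> l < N \<Longrightarrow>
      mmult N f Y i l = (if l = sorted_list_of_set ({..<N} - set q) ! (i - d) then 1 else 0)"
  shows "detN N f = (-1) ^ sum_list q * detN d (\<lambda>i j. mmult N f Y i (q ! j))"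
proof -
  have "detN N f = detN N (mmult N f Y)"
    by (simp add: detN_mmult assms(4))
  also have "\<dots> = (-1) ^ sum_list q * detN d (\<lambda>i j. mmult N f Y i (q ! j))"
    by (rule detN_unit_rows_sorted_gt[OF assms(1-3)]) (simp add: assms(5))
  finally show ?thesis .
qed

section \<open>Generating series\<close>

interpretation lconst: comm_ring_hom lconst
  by unfold_locales (simp_all add: lconst_def single_add mult_single single_one)

lemma hc_neg [simp]: "k < 0 \<Longrightarrow> hc k = 0"
  by (simp add: hc_def)

lemma hc_0 [simp]: "hc 0 = 1"
  by (simp add: hc_def)

lemma esym_0 [simp]: "esym 0 xs = 1"
proof -
  have "{S. S \<subseteq> {..<length xs} \<and> card S = 0} = {{}}"
    by (auto dest: finite_subset[OF _ finite_lessThan])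
  then show ?thesis
    by (simp add: esym_def)
qed

lemma esym_eq_0: "length xs < n \<Longrightarrow> esym n xs = 0"
  unfolding esym_def by (rule sum.neutral) (auto dest: card_mono[OF finite_lessThan])

lemma esym_map_uminus: "esym n (map uminus xs) = (-1) ^ n * esym n xs"
  unfolding esym_def sum_distrib_left length_map
proof (intro sum.cong refl)
  fix S assume S: "S \<in> {S. S \<subseteq> {..<length xs} \<and> card S = n}"
  then have "(\<Prod>i\<in>S. map uminus xs ! i) = (\<Prod>i\<in>S. - (xs ! i))"
    by (intro prod.cong) auto
  then show "(\<Prod>i\<in>S. map uminus xs ! i) = (-1) ^ n * (\<Prod>i\<in>S. xs ! i)"
    using S by (simp add: prod_uminus)
qed

lemma fps_const_prod: "(\<Prod>i\<in>A. fps_const (c i)) = fps_const (\<Prod>i\<in>A. c i)"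
  by (induction A rule: infinite_finite_induct) (simp_all add: fps_const_mult)

definition esym_fps :: "complex list \<Rightarrow> complex fps" where
  "esym_fps xs = (\<Prod>x\<leftarrow>xs. 1 - fps_const x * fps_X)"

lemma fps_nth_prod_one_minus_X:
  fixes y :: "'i \<Rightarrow> 'a::comm_ring_1"
  assumes "finite I"
  shows "fps_nth (\<Prod>i\<in>I. 1 - fps_const (y i) * fps_X) n =
    (-1) ^ n * (\<Sum>B | B \<subseteq> I \<and> card B = n. \<Prod>i\<in>B. y i)"
proof -
  have "(\<Prod>i\<in>I. 1 - fps_const (y i) * fps_X) = (\<Prod>i\<in>I. fps_const (- y i) * fps_X + 1)"
    by (simp add: fps_const_neg[symmetric] del: fps_const_neg)
  also have "\<dots> = (\<Sum>B\<in>Pow I. fps_const (\<Prod>i\<in>B. - y i) * fps_X ^ card B)"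
    by (simp add: prod_add[OF assms] prod.distrib fps_const_prod)
  finally have "fps_nth (\<Prod>i\<in>I. 1 - fps_const (y i) * fps_X) n =
      (\<Sum>B\<in>Pow I. if card B = n then (-1) ^ n * (\<Prod>i\<in>B. y i) else 0)"
    by (auto simp: fps_sum_nth fps_X_power_mult_right_nth prod_uminus intro!: sum.cong)
  also have "\<dots> = (\<Sum>B | B \<subseteq> I \<and> card B = n. (-1) ^ n * (\<Prod>i\<in>B. y i))"
    using assms by (simp add: sum.If_cases Int_def)
  finally show ?thesis
    by (simp add: sum_distrib_left)
qed

lemma fps_nth_esym_fps: "fps_nth (esym_fps xs) n = (-1) ^ n * esym n xs"
proof -
  have "esym_fps xs = (\<Prod>i\<in>{..<length xs}. 1 - fps_const (xs ! i) * fps_X)"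
    by (simp add: esym_fps_def prod.list_conv_set_nth lessThan_atLeast0)
  then show ?thesis
    by (simp add: fps_nth_prod_one_minus_X esym_def)
qed

lemma esym_fps_nth_0 [simp]: "fps_nth (esym_fps xs) 0 = 1"
  by (simp add: fps_nth_esym_fps)

lemma esym_fps_nth_eq_0: "length xs < n \<Longrightarrow> fps_nth (esym_fps xs) n = 0"
  by (simp add: fps_nth_esym_fps esym_eq_0)

lemma esym_fps_append: "esym_fps (xs @ ys) = esym_fps xs * esym_fps ys"
  by (simp add: esym_fps_def)

lemma esym_rev: "esym n (rev xs) = esym n xs"
proof -
  have "esym_fps (rev xs) = esym_fps xs"
    by (simp add: esym_fps_def rev_map[symmetric])
  then have "(-1) ^ n * esym n (rev xs) = (-1) ^ n * esym n xs"
    by (metis fps_nth_esym_fps)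
  then show ?thesis
    by simp
qed

definition a_fps :: "int \<Rightarrow> int \<Rightarrow> complex fps" where
  "a_fps lo hi = esym_fps (map a_half [lo..hi])"

lemma a_fps_nth_0 [simp]: "fps_nth (a_fps lo hi) 0 = 1"
  by (simp add: a_fps_def)

lemma a_fps_nth_eq_0: "nat (hi - lo + 1) < n \<Longrightarrow> fps_nth (a_fps lo hi) n = 0"
  by (simp add: a_fps_def esym_fps_nth_eq_0)

lemma a_fps_split:
  assumes "lo \<le> m + 1" "m \<le> hi"
  shows "a_fps lo hi = a_fps lo m * a_fps (m + 1) hi"
proof (cases "lo \<le> m")
  case True
  then show ?thesis
    using upto_split2[OF True assms(2)] by (simp add: a_fps_def esym_fps_append)
next
  case False
  then have "lo = m + 1"
    using assms(1) by simp
  then show ?thesis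
    by (simp add: a_fps_def esym_fps_def)
qed

text \<open>\<open>a_upto m\<close> is \<open>\<Prod>\<^sub>s\<^sub>=\<^sub>1\<^sup>m (1 - a\<^sub>s t)\<close> with the convention
  \<open>\<Prod>\<^sub>s\<^sub>=\<^sub>1\<^sup>m = 1 / \<Prod>\<^sub>s\<^sub>=\<^sub>m\<^sub>+\<^sub>1\<^sup>0\<close> for \<open>m < 0\<close>.\<close>

definition a_upto :: "int \<Rightarrow> complex fps" where
  "a_upto m = (if 0 \<le> m then a_fps 1 m else inverse (a_fps (m + 1) 0))"

lemma a_upto_nth_0 [simp]: "fps_nth (a_upto m) 0 = 1"
  by (simp add: a_upto_def)

lemma a_upto_mult:
  assumes "lo \<le> 1" "lo - 1 \<le> m"
  shows "a_upto m * a_fps lo 0 = a_fps lo m"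
proof (cases "0 \<le> m")
  case True
  then show ?thesis
    using a_fps_split[of lo 0 m] assms by (simp add: a_upto_def mult.commute)
next
  case False
  then have "a_fps lo 0 = a_fps lo m * a_fps (m + 1) 0"
    using assms by (intro a_fps_split) auto
  then show ?thesis
    using False inverse_mult_eq_1[of "a_fps (m + 1) 0"] by (simp add: a_upto_def mult.commute mult.left_commute)
qed

lemma map_a_half_pos: "map a_half [1..int p] = map (\<lambda>k. of_nat k + 1/2) [0..<p]"
  by (rule nth_equalityI) (simp_all add: a_half_def nth_upto)

lemma map_a_half_nonpos: "map a_half [1 - int l..0] = map uminus (rev (map (\<lambda>k. of_nat k + 1/2) [0..<l]))"
  by (rule nth_equalityI) (simp_all add: a_half_def nth_upto rev_nth of_nat_diff)

lemma ccoef_eq_fps_nth: "x \<le> p \<Longrightarrow> ccoef p x = fps_nth (a_upto (int p)) (p - x)"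
  by (simp add: ccoef_def a_upto_def a_fps_def fps_nth_esym_fps map_a_half_pos)

lemma ccoef_eq_0: "p < x \<Longrightarrow> ccoef p x = 0"
  by (simp add: ccoef_def)

definition cmat :: "nat \<Rightarrow> nat \<Rightarrow> sym_fun" where
  "cmat k l = lconst ((-1) ^ (k + l) * ccoef l k)"

lemma cmat_eq_fps_nth: "cmat k l = (if k \<le> l then lconst (fps_nth (a_fps (1 - int l) 0) (l - k)) else 0)"
proof (cases "k \<le> l")
  case True
  have "(-1) ^ (k + l) * ccoef l k = ((-1) ^ (k + l) * (-1) ^ (l - k)) * esym (l - k) (map (\<lambda>k. of_nat k + 1/2) [0..<l])"
    using True by (simp add: ccoef_def)
  also have "(-1::complex) ^ (k + l) * (-1) ^ (l - k) = 1"
    using True by (simp add: power_add[symmetric] minus_one_power_eq_if_even_sum[of _ 0 l])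
  finally show ?thesis
    using True by (simp add: cmat_def a_fps_def fps_nth_esym_fps map_a_half_nonpos esym_map_uminus esym_rev)
qed (simp add: cmat_def ccoef_def)

lemma detN_cmat: "detN N cmat = 1"
  by (rule detN_upper_unitriangular) (simp_all add: cmat_def ccoef_def)

text \<open>\<open>hcoeff F k\<close> is the coefficient of \<open>t\<^sup>k\<close> in \<open>F(t) H(t)\<close>, where \<open>H(t) = \<Sum>\<^sub>k h\<^sub>k t\<^sup>k\<close>.\<close>

definition hcoeff :: "complex fps \<Rightarrow> int \<Rightarrow> sym_fun" where
  "hcoeff F k = (\<Sum>n\<le>nat k. lconst (fps_nth F n) * hc (k - int n))"

lemma hcoeff_eq_sum:
  assumes "nat k < M"
  shows "hcoeff F k = (\<Sum>n<M. lconst (fps_nth F n) * hc (k - int n))"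
  unfolding hcoeff_def
proof (rule sum.mono_neutral_left)
  show "\<forall>n\<in>{..<M} - {..nat k}. lconst (fps_nth F n) * hc (k - int n) = 0"
    by auto
qed (use assms in auto)

lemma hcoeff_nonpos: "k \<le> 0 \<Longrightarrow> hcoeff F k = lconst (fps_nth F 0) * hc k"
  by (simp add: hcoeff_def)

lemma hcoeff_1: "hcoeff 1 k = hc k"
proof -
  have "hcoeff 1 k = (\<Sum>n\<le>nat k. if n = 0 then hc k else 0)"
    unfolding hcoeff_def by (intro sum.cong) auto
  then show ?thesis
    by simp
qed

lemma fps_mult_nth_poly:
  fixes F G :: "'a::comm_semiring_1 fps"
  assumes "\<And>n. j < n \<Longrightarrow> fps_nth G n = 0"
  shows "fps_nth (F * G) n = (\<Sum>b\<le>j. if b \<le> n then fps_nth G b * fps_nth F (n - b) else 0)"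
proof -
  have "fps_nth (F * G) n = (\<Sum>b\<le>n. fps_nth G b * fps_nth F (n - b))"
    by (simp add: mult.commute[of F] fps_mult_nth atLeast0AtMost)
  also have "\<dots> = (\<Sum>b\<in>{b \<in> {..j}. b \<le> n}. fps_nth G b * fps_nth F (n - b))"
  proof (rule sum.mono_neutral_right)
    show "\<forall>b\<in>{..n} - {b \<in> {..j}. b \<le> n}. fps_nth G b * fps_nth F (n - b) = 0"
    proof
      fix b assume "b \<in> {..n} - {b \<in> {..j}. b \<le> n}"
      then have "j < b" by auto
      then show "fps_nth G b * fps_nth F (n - b) = 0" using assms by simp
    qed
  qed auto
  also have "\<dots> = (\<Sum>b\<le>j. if b \<le> n then fps_nth G b * fps_nth F (n - b) else 0)"
    by (rule sum.inter_filter) simp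
  finally show ?thesis .
qed

lemma hcoeff_mult_poly:
  assumes "\<And>n. j < n \<Longrightarrow> fps_nth G n = 0"
  shows "hcoeff (F * G) (m + int j) = (\<Sum>r\<le>j. hcoeff F (m + int r) * lconst (fps_nth G (j - r)))"
proof -
  define M where "M = nat (m + int j) + j + 1"
  define T where "T = (\<lambda>b n. lconst (fps_nth F (n - b)) * hc (m + int j - int n))"
  have shift: "hcoeff F (m + int j - int b) = (\<Sum>n<M. if b \<le> n then T b n else 0)" if "b \<le> j" for b
  proof -
    have "(\<Sum>n<M. if b \<le> n then T b n else 0) = (\<Sum>n\<in>{b..<M}. T b n)"
      by (subst sum.inter_filter[symmetric]) (auto intro: sum.cong)
    also have "\<dots> = (\<Sum>a<M - b. T b (a + b))"
      using sum.shift_bounds_nat_ivl[of "T b" 0 b "M - b"] that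
      by (simp add: M_def lessThan_atLeast0)
    also have "\<dots> = hcoeff F (m + int j - int b)"
      using that by (subst hcoeff_eq_sum[of _ "M - b"]) (auto simp: M_def T_def algebra_simps)
    finally show ?thesis ..
  qed
  have "hcoeff (F * G) (m + int j) = (\<Sum>n<M. lconst (fps_nth (F * G) n) * hc (m + int j - int n))"
    by (rule hcoeff_eq_sum) (simp add: M_def)
  also have "\<dots> = (\<Sum>n<M. \<Sum>b\<le>j. lconst (fps_nth G b) * (if b \<le> n then T b n else 0))"
    by (intro sum.cong refl)
      (auto simp: fps_mult_nth_poly[OF assms] lconst.hom_sum sum_distrib_right lconst.hom_mult T_def
        mult.assoc intro!: sum.cong)
  also have "\<dots> = (\<Sum>b\<le>j. lconst (fps_nth G b) * hcoeff F (m + int j - int b))"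
    by (subst sum.swap) (simp add: shift sum_distrib_left)
  also have "\<dots> = (\<Sum>r\<le>j. hcoeff F (m + int r) * lconst (fps_nth G (j - r)))"
    by (rule sum.reindex_bij_witness[of _ "\<lambda>r. j - r" "\<lambda>b. j - b"]) (auto simp: of_nat_diff add_diff_eq mult.commute)
  finally show ?thesis .
qed

lemma hsh_eq_hcoeff: "hsh b k = hcoeff (esym_fps (map b [1..k - 1])) k"
proof (cases "k \<le> 0")
  case True
  then show ?thesis
    by (auto simp: hsh_def hcoeff_nonpos)
next
  case False
  define xs where "xs = map b [1..k - 1]"
  have "hcoeff (esym_fps xs) k = (\<Sum>n<nat k. lconst ((-1) ^ n * esym n xs) * hc (k - int n))"
    unfolding hcoeff_def lessThan_Suc_atMost[symmetric] sum.lessThan_Suc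
    using False by (simp add: fps_nth_esym_fps esym_eq_0 xs_def)
  also have "\<dots> = (\<Sum>i=1..k. lconst ((-1) ^ nat (k - i) * esym (nat (k - i)) xs) * hc i)"
    by (rule sum.reindex_bij_witness[of _ "\<lambda>i. nat (k - i)" "\<lambda>n. k - int n"]) auto
  also have "\<dots> = hsh b k"
    using False by (simp add: hsh_def xs_def)
  finally show ?thesis
    by (simp add: xs_def)
qed

lemma hsh_tau_a_half: "hsh (tau (- int j) a_half) k = hcoeff (a_fps (1 - int j) (k - 1 - int j)) k"
proof -
  have "map (tau (- int j) a_half) [1..k - 1] = map a_half [1 - int j..k - 1 - int j]"
    by (rule nth_equalityI) (simp_all add: tau_def nth_upto algebra_simps)
  then show ?thesis
    by (simp add: hsh_eq_hcoeff a_fps_def)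
qed

lemma hsh_tau_a_half_factor:
  "hsh (tau (- int j) a_half) (\<rho> + 1 + int j) = hcoeff (a_upto \<rho> * a_fps (1 - int j) 0) (\<rho> + 1 + int j)"
proof (cases "- int j \<le> \<rho>")
  case True
  then show ?thesis
    by (simp add: hsh_tau_a_half a_upto_mult)
next
  case False
  then show ?thesis
    by (simp add: hsh_tau_a_half hcoeff_nonpos fps_mult_nth_0)
qed

section \<open>Frobenius coordinates\<close>

definition shifted_part :: "(nat \<Rightarrow> nat) \<Rightarrow> nat \<Rightarrow> int" where
  "shifted_part mu i = int (mu (Suc i)) - int (Suc i)"

lemma sorted_gt_nth_gap:
  assumes "sorted_wrt (>) (q::nat list)" "i \<le> j" "j < length q"
  shows "q ! j + (j - i) \<le> q ! i"
  using assms(2,3)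
proof (induction j rule: dec_induct)
  case (step n)
  then have "q ! Suc n < q ! n"
    using assms(1) by (simp add: sorted_wrt_iff_nth_less)
  with step show ?case by simp
qed simp

lemma frob_len_ge: "sorted_wrt (>) q \<Longrightarrow> length q \<le> frob_len q"
  using sorted_gt_nth_gap[of q 0 "length q - 1"] by (cases q) (auto simp: frob_len_def)

lemma set_subset_frob_len: "sorted_wrt (>) q \<Longrightarrow> set q \<subseteq> {..<frob_len q}"
  using sorted_gt_nth_gap[of q 0] by (cases q) (fastforce simp: frob_len_def in_set_conv_nth)+

lemma frob_len_le: "set q \<subseteq> {..<N} \<Longrightarrow> frob_len q \<le> N"
  by (cases q) (auto simp: frob_len_def)

lemma frob_part_eq_0:
  assumes "frob_valid p q" "frob_len q < i"
  shows "frob_part p q i = 0"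
proof -
  have sq: "sorted_wrt (>) q" and "length p = length q"
    using assms(1) by (auto simp: frob_valid_def)
  moreover have "q ! (j - 1) + j \<le> frob_len q" if "1 \<le> j" "j \<le> length q" for j
  proof -
    have "q ! (j - 1) + (j - 1) \<le> q ! 0"
      using sorted_gt_nth_gap[OF sq, of 0 "j - 1"] that by simp
    moreover have "q \<noteq> []"
      using that by auto
    ultimately show ?thesis
      using that by (simp add: frob_len_def)
  qed
  ultimately show ?thesis
    using frob_len_ge[OF sq] assms(2) by (fastforce simp: frob_part_def)
qed

lemma shifted_part_frob_pos: "i < length p \<Longrightarrow> shifted_part (frob_part p q) i = int (p ! i)"
  by (simp add: shifted_part_def frob_part_def)

lemma frob_part_beyond_diagonal:
  assumes "frob_valid p q" "length q \<le> i"
  shows "frob_part p q (Suc i) = card {j. j < length q \<and> i \<le> q ! j + j}"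
proof -
  have "{j. 1 \<le> j \<and> j \<le> length q \<and> Suc i \<le> q ! (j - 1) + j} = Suc ` {j. j < length q \<and> i \<le> q ! j + j}"
  proof (intro equalityI subsetI)
    fix x assume "x \<in> {j. 1 \<le> j \<and> j \<le> length q \<and> Suc i \<le> q ! (j - 1) + j}"
    then show "x \<in> Suc ` {j. j < length q \<and> i \<le> q ! j + j}"
      by (intro image_eqI[of _ _ "x - 1"]) auto
  qed auto
  then show ?thesis
    using assms by (simp add: frob_part_def frob_valid_def card_image)
qed

lemma card_less_nth_sorted:
  assumes "sorted_wrt (<) (ws::nat list)" "t < length ws"
  shows "card {x \<in> set ws. x < ws ! t} = t"
proof -
  have "{x \<in> set ws. x < ws ! t} = (!) ws ` {..<t}"
  proof (intro equalityI subsetI)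
    fix x assume "x \<in> {x \<in> set ws. x < ws ! t}"
    then obtain i where i: "i < length ws" "x = ws ! i" "ws ! i < ws ! t"
      by (auto simp: in_set_conv_nth)
    have "i < t"
    proof (rule ccontr)
      assume "\<not> i < t"
      then have "ws ! t \<le> ws ! i"
        using assms i(1) by (intro sorted_nth_mono) (simp_all add: strict_sorted_imp_sorted)
      with i(3) show False by simp
    qed
    with i show "x \<in> (!) ws ` {..<t}" by auto
  next
    fix x assume "x \<in> (!) ws ` {..<t}"
    then show "x \<in> {x \<in> set ws. x < ws ! t}"
      using assms by (auto simp: sorted_wrt_iff_nth_less)
  qed
  moreover have "inj_on ((!) ws) {..<t}"
    using assms strict_sorted_iff[of ws] by (auto simp: inj_on_def nth_eq_iff_index_eq)
  ultimately show ?thesis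
    by (simp add: card_image)
qed

text \<open>Below the \<open>t\<close>-th element \<open>w\<close> of the complement of \<open>q\<close> lie \<open>t\<close> elements of the complement,
  hence \<open>w - t\<close> elements of \<open>q\<close>.\<close>

lemma card_greater_nth_complement:
  fixes q :: "nat list" and N t :: nat
  defines "w \<equiv> sorted_list_of_set ({..<N} - set q) ! t"
  assumes "distinct q" "set q \<subseteq> {..<N}" "t < N - length q"
  shows "card {x \<in> set q. w < x} + w = length q + t" and "w \<notin> set q" and "w < N"
proof -
  define ws where "ws = sorted_list_of_set ({..<N} - set q)"
  have "length ws = N - length q"
    using assms(2,3) by (simp add: ws_def card_Diff_subset distinct_card)
  then have "t < length ws"
    using assms(4) by simp
  then have "w \<in> set ws"
    using nth_mem[of t ws] by (simp only: w_def ws_def)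
  then show "w \<notin> set q" and "w < N"
    by (auto simp: ws_def)
  have "{..<w} = {x \<in> set q. x < w} \<union> {x \<in> set ws. x < w}"
    using \<open>w < N\<close> by (auto simp: ws_def)
  then have "w = card ({x \<in> set q. x < w} \<union> {x \<in> set ws. x < w})"
    by (metis card_lessThan)
  also have "\<dots> = card {x \<in> set q. x < w} + t"
    using card_less_nth_sorted[OF _ \<open>t < length ws\<close>]
    by (subst card_Un_disjoint) (auto simp: ws_def w_def)
  finally have below: "w = card {x \<in> set q. x < w} + t" .
  have "set q = {x \<in> set q. x < w} \<union> {x \<in> set q. w < x}"
    using \<open>w \<notin> set q\<close> by (auto simp: not_less) (metis le_neq_implies_less)
  then have "length q = card ({x \<in> set q. x < w} \<union> {x \<in> set q. w < x})"
    using distinct_card[OF assms(2)] by simp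
  also have "\<dots> = card {x \<in> set q. x < w} + card {x \<in> set q. w < x}"
    by (rule card_Un_disjoint) auto
  finally show "card {x \<in> set q. w < x} + w = length q + t"
    using below by linarith
qed

lemma down_closed_eq_lessThan:
  assumes "finite S" "\<And>x y. x \<in> S \<Longrightarrow> y \<le> x \<Longrightarrow> y \<in> (S::nat set)"
  shows "S = {..<card S}"
proof (intro equalityI subsetI)
  fix x assume "x \<in> S"
  then have "{..x} \<subseteq> S"
    using assms(2) by auto
  then have "card {..x} \<le> card S"
    by (rule card_mono[OF assms(1)])
  then show "x \<in> {..<card S}"
    by simp
next
  fix x assume x: "x \<in> {..<card S}"
  show "x \<in> S"
  proof (rule ccontr)
    assume "x \<notin> S"
    then have "S \<subseteq> {..<x}"
      using assms(2) by (meson lessThan_iff not_le subsetI)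
    then show False
      using card_mono[of "{..<x}" S] x by simp
  qed
qed

lemma sorted_gt_greater_eq_lessThan:
  assumes "sorted_wrt (>) (q::nat list)"
  shows "{j. j < length q \<and> w < q ! j} = {..<card {x \<in> set q. w < x}}"
proof -
  let ?J = "{j. j < length q \<and> w < q ! j}"
  have "(!) q ` ?J = {x \<in> set q. w < x}"
    by (auto simp: in_set_conv_nth)
  moreover have "inj_on ((!) q) ?J"
    using sorted_gt_distinct[OF assms] by (auto simp: inj_on_def nth_eq_iff_index_eq)
  ultimately have card_J: "card ?J = card {x \<in> set q. w < x}"
    using card_image by fastforce
  have "?J = {..<card ?J}"
  proof (rule down_closed_eq_lessThan)
    fix x y assume "x \<in> ?J" "y \<le> x"
    then show "y \<in> ?J"
      using sorted_gt_nth_gap[OF assms \<open>y \<le> x\<close>] by auto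
  qed simp
  then show ?thesis
    unfolding card_J .
qed

text \<open>Since \<open>q ! j + j\<close> is non-increasing in \<open>j\<close>, the threshold \<open>w + c\<close> is passed exactly by the
  \<open>c\<close> indices with \<open>q ! j > w\<close>.\<close>

lemma sorted_gt_nth_add_ge_iff:
  fixes q :: "nat list" and w :: nat
  defines "c \<equiv> card {x \<in> set q. w < x}"
  assumes "sorted_wrt (>) q" "w \<notin> set q"
  shows "{j. j < length q \<and> w + c \<le> q ! j + j} = {..<c}"
proof -
  let ?J = "{j. j < length q \<and> w < q ! j}"
  have above: "?J = {..<c}"
    unfolding c_def by (rule sorted_gt_greater_eq_lessThan[OF assms(2)])
  show ?thesis
  proof (intro equalityI subsetI)
    fix j assume j: "j \<in> {j. j < length q \<and> w + c \<le> q ! j + j}"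
    show "j \<in> {..<c}"
    proof (rule ccontr)
      assume "j \<notin> {..<c}"
      then have "c \<le> j" by simp
      with j have "c < length q" by simp
      have "c \<notin> ?J"
        unfolding above by simp
      moreover have "q ! c \<noteq> w"
        using assms(3) nth_mem[OF \<open>c < length q\<close>] by auto
      ultimately have "q ! c < w"
        using \<open>c < length q\<close> by simp
      moreover have "q ! j + (j - c) \<le> q ! c"
        using sorted_gt_nth_gap[OF assms(2) \<open>c \<le> j\<close>] j by simp
      moreover have "w + c \<le> q ! j + j"
        using j by simp
      ultimately show False
        using \<open>c \<le> j\<close> by arith
    qed
  next
    fix j assume "j \<in> {..<c}"
    then have "c - 1 \<in> ?J" "j \<le> c - 1"
      unfolding above by auto
    moreover have "q ! (c - 1) + (c - 1 - j) \<le> q ! j"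
      using sorted_gt_nth_gap[OF assms(2) \<open>j \<le> c - 1\<close>] \<open>c - 1 \<in> ?J\<close> by simp
    ultimately show "j \<in> {j. j < length q \<and> w + c \<le> q ! j + j}"
      by auto
  qed
qed

lemma shifted_part_frob_neg:
  assumes "frob_valid p q" "frob_len q \<le> N" "length q \<le> i" "i < N"
  shows "shifted_part (frob_part p q) i = - 1 - int (sorted_list_of_set ({..<N} - set q) ! (i - length q))"
proof -
  define w where "w = sorted_list_of_set ({..<N} - set q) ! (i - length q)"
  define c where "c = card {x \<in> set q. w < x}"
  have sq: "sorted_wrt (>) q"
    using assms(1) by (simp add: frob_valid_def)
  have "set q \<subseteq> {..<N}"
    using set_subset_frob_len[OF sq] assms(2) by auto
  then have "c + w = i" and "w \<notin> set q"
    using card_greater_nth_complement[OF sorted_gt_distinct[OF sq], of N "i - length q"] assms(3,4)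
    by (simp_all add: c_def w_def)
  then have "{j. j < length q \<and> i \<le> q ! j + j} = {..<c}"
    using sorted_gt_nth_add_ge_iff[OF sq, of w] by (simp add: c_def add.commute)
  then have "frob_part p q (Suc i) = c"
    using frob_part_beyond_diagonal[OF assms(1,3)] by simp
  then show ?thesis
    using \<open>c + w = i\<close> by (auto simp: shifted_part_def w_def)
qed

lemma frob_complement_nth_less:
  assumes "frob_valid p q" "frob_len q \<le> N" "length q \<le> i" "i < N"
  shows "sorted_list_of_set ({..<N} - set q) ! (i - length q) < N"
proof -
  have sq: "sorted_wrt (>) q"
    using assms(1) by (simp add: frob_valid_def)
  then have "set q \<subseteq> {..<N}"
    using set_subset_frob_len assms(2) by fastforce
  then show ?thesis
    using card_greater_nth_complement(3)[OF sorted_gt_distinct[OF sq]] assms(3,4) by simp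
qed

section \<open>The Jacobi--Trudi matrices\<close>

lemma schur_stable:
  assumes "\<And>i. M < i \<Longrightarrow> mu i = 0" "M \<le> N"
  shows "schur N mu = schur M mu"
  using assms(2)
proof (induction N rule: dec_induct)
  case (step n)
  have "detN (Suc n) (\<lambda>i j. hc (int (mu (i + 1)) - int (i + 1) + int (j + 1))) =
      (-1) ^ (n + n) * detN n (\<lambda>i j. hc (int (mu (i + 1)) - int (i + 1) + int ((if j < n then j else Suc j) + 1)))"
    using assms(1)[of "Suc n"] step(1) by (intro detN_last_row_unit) (auto simp: hc_def)
  also have "\<dots> = schur n mu"
    unfolding schur_def by (auto intro: detN_cong)
  finally show ?case
    using step.IH by (simp add: schur_def)
qed simp

text \<open>Row \<open>i\<close> (counted from 0) of \<open>jt_mat mu\<close> and \<open>fs_mat mu\<close> belongs to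
  \<open>\<rho> = shifted_part mu i\<close>; the matrices \<open>umat\<close>, \<open>dmat\<close> and \<open>cmat\<close> are \<open>U\<close>, \<open>D\<close> and \<open>D\<^sup>-\<^sup>1\<close> of the
  introductory sketch.\<close>

definition jt_mat :: "(nat \<Rightarrow> nat) \<Rightarrow> nat \<Rightarrow> nat \<Rightarrow> sym_fun" where
  "jt_mat mu i r = hc (shifted_part mu i + 1 + int r)"

definition fs_mat :: "(nat \<Rightarrow> nat) \<Rightarrow> nat \<Rightarrow> nat \<Rightarrow> sym_fun" where
  "fs_mat mu i r = hcoeff (a_upto (shifted_part mu i)) (shifted_part mu i + 1 + int r)"

definition hrow :: "nat \<Rightarrow> nat \<Rightarrow> sym_fun" where
  "hrow x r = hc (int x + 1 + int r)"

definition umat :: "nat \<Rightarrow> nat \<Rightarrow> sym_fun" where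
  "umat k r = hc (int r - int k)"

definition dmat :: "nat \<Rightarrow> nat \<Rightarrow> sym_fun" where
  "dmat w k = (if w \<le> k then lconst (fps_nth (a_upto (- 1 - int w)) (k - w)) else 0)"

lemma schur_eq_detN_jt_mat: "schur N mu = detN N (jt_mat mu)"
  unfolding schur_def jt_mat_def shifted_part_def by (intro detN_cong) (simp add: algebra_simps)

text \<open>The matrix of \<open>schur_sh a_half\<close> is \<open>fs_mat\<close> times the unitriangular \<open>cmat\<close>: the entry
  \<open>(i, j)\<close> is the coefficient of \<open>t\<^sup>\<rho>\<^sup>+\<^sup>1\<^sup>+\<^sup>j\<close> in \<open>a_upto \<rho> \<cdot> a_fps (1 - j) 0 \<cdot> H\<close>, and the
  second factor is a polynomial of degree \<open>j\<close>.\<close>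

lemma schur_sh_a_half_eq_detN_fs_mat: "schur_sh a_half N mu = detN N (fs_mat mu)"
proof -
  have "schur_sh a_half N mu = detN N (mmult N (fs_mat mu) cmat)"
    unfolding schur_sh_def
  proof (rule detN_cong)
    fix i j assume "j < N"
    have "hsh (tau (1 - int (j + 1)) a_half) (int (mu (i + 1)) - int (i + 1) + int (j + 1)) =
        hcoeff (a_upto (shifted_part mu i) * a_fps (1 - int j) 0) ((shifted_part mu i + 1) + int j)"
      using hsh_tau_a_half_factor[of j "shifted_part mu i"] by (simp add: shifted_part_def algebra_simps)
    also have "\<dots> = (\<Sum>r\<le>j. fs_mat mu i r * lconst (fps_nth (a_fps (1 - int j) 0) (j - r)))"
      by (subst hcoeff_mult_poly) (auto simp: fs_mat_def a_fps_nth_eq_0 algebra_simps)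
    also have "\<dots> = mmult N (fs_mat mu) cmat i j"
      unfolding mmult_def cmat_eq_fps_nth using \<open>j < N\<close>
      by (intro sum.mono_neutral_cong_left) auto
    finally show "hsh (tau (1 - int (j + 1)) a_half) (int (mu (i + 1)) - int (i + 1) + int (j + 1)) =
        mmult N (fs_mat mu) cmat i j" .
  qed
  then show ?thesis
    by (simp add: detN_mmult detN_cmat)
qed

lemma detN_umat: "detN N umat = 1"
  by (rule detN_upper_unitriangular) (simp_all add: umat_def)

lemma hcoeff_a_upto_nat:
  assumes "p \<le> K"
  shows "hcoeff (a_upto (int p)) (int p + 1 + int r) = (\<Sum>x\<le>K. lconst (ccoef p x) * hrow x r)"
proof -
  have "hcoeff (a_upto (int p)) (int p + 1 + int r) = hcoeff (1 * a_upto (int p)) ((int r + 1) + int p)"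
    by (simp add: algebra_simps)
  also have "\<dots> = (\<Sum>x\<le>p. hc (int r + 1 + int x) * lconst (fps_nth (a_upto (int p)) (p - x)))"
    by (subst hcoeff_mult_poly) (auto simp: hcoeff_1 a_upto_def a_fps_nth_eq_0)
  also have "\<dots> = (\<Sum>x\<le>p. lconst (ccoef p x) * hrow x r)"
    by (intro sum.cong) (auto simp: ccoef_eq_fps_nth hrow_def algebra_simps)
  also have "\<dots> = (\<Sum>x\<le>K. lconst (ccoef p x) * hrow x r)"
    using assms by (intro sum.mono_neutral_left) (auto simp: ccoef_eq_0)
  finally show ?thesis .
qed

lemma hcoeff_a_upto_neg:
  assumes "w < N" "r < N"
  shows "hcoeff (a_upto (- 1 - int w)) (int r - int w) = mmult N dmat umat w r"
proof (cases "w \<le> r")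
  case False
  then have "mmult N dmat umat w r = 0"
    by (auto simp: mmult_def dmat_def umat_def intro!: sum.neutral)
  with False show ?thesis
    by (simp add: hcoeff_nonpos)
next
  case True
  let ?A = "a_upto (- 1 - int w)"
  have "hcoeff ?A (int r - int w) = (\<Sum>n<N - w. lconst (fps_nth ?A n) * hc (int r - int w - int n))"
    using assms True by (intro hcoeff_eq_sum) auto
  also have "\<dots> = (\<Sum>k\<in>{w..<N}. lconst (fps_nth ?A (k - w)) * hc (int r - int k))"
    using sum.shift_bounds_nat_ivl[of "\<lambda>k. lconst (fps_nth ?A (k - w)) * hc (int r - int k)" 0 w "N - w"] assms
    by (simp add: lessThan_atLeast0 algebra_simps)
  also have "\<dots> = mmult N dmat umat w r"
    unfolding mmult_def dmat_def umat_def by (intro sum.mono_neutral_cong_left) auto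
  finally show ?thesis .
qed

lemma dmat_cmat:
  assumes "w < N" "l < N"
  shows "mmult N dmat cmat w l = (if w = l then 1 else 0)"
proof (cases "w \<le> l")
  case False
  then show ?thesis
    by (auto simp: mmult_def dmat_def cmat_eq_fps_nth intro!: sum.neutral)
next
  case True
  let ?A = "a_upto (- 1 - int w)" and ?G = "a_fps (1 - int l) 0"
  have shift: "(\<Sum>k\<in>{w..l}. fps_nth ?A (k - w) * fps_nth ?G (l - k)) =
      (\<Sum>i\<in>{0..l - w}. fps_nth ?A i * fps_nth ?G (l - w - i))"
    using sum.shift_bounds_cl_nat_ivl[of "\<lambda>k. fps_nth ?A (k - w) * fps_nth ?G (l - k)" 0 w "l - w"] True
    by (simp add: diff_diff_left add.commute)
  have "mmult N dmat cmat w l = (\<Sum>k\<in>{w..l}. lconst (fps_nth ?A (k - w)) * lconst (fps_nth ?G (l - k)))"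
    unfolding mmult_def dmat_def cmat_eq_fps_nth using assms
    by (intro sum.mono_neutral_cong_right) auto
  also have "\<dots> = lconst (\<Sum>k\<in>{w..l}. fps_nth ?A (k - w) * fps_nth ?G (l - k))"
    by (simp add: lconst.hom_sum lconst.hom_mult)
  also have "\<dots> = lconst (\<Sum>i\<in>{0..l - w}. fps_nth ?A i * fps_nth ?G (l - w - i))"
    by (simp only: shift)
  also have "\<dots> = lconst (fps_nth (?A * ?G) (l - w))"
    by (simp add: fps_mult_nth)
  also have "\<dots> = (if w = l then 1 else 0)"
  proof (cases "w = l")
    case False
    then have "?A * ?G = a_fps (1 - int l) (- 1 - int w)"
      using True by (intro a_upto_mult) auto
    then show ?thesis
      using True False by (simp add: a_fps_nth_eq_0)
  qed (simp add: fps_mult_nth_0)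
  finally show ?thesis .
qed

lemma jt_mat_frob_pos: "i < length p \<Longrightarrow> jt_mat (frob_part p q) i r = hrow (p ! i) r"
  by (simp add: jt_mat_def hrow_def shifted_part_frob_pos)

lemma jt_mat_frob_neg:
  assumes "frob_valid p q" "frob_len q \<le> N" "length q \<le> i" "i < N"
  shows "jt_mat (frob_part p q) i r = umat (sorted_list_of_set ({..<N} - set q) ! (i - length q)) r"
  by (simp add: jt_mat_def umat_def shifted_part_frob_neg[OF assms])

lemma fs_mat_frob_pos:
  assumes "i < length p" "p ! i \<le> K"
  shows "fs_mat (frob_part p q) i r = (\<Sum>x\<le>K. lconst (ccoef (p ! i) x) * hrow x r)"
  using hcoeff_a_upto_nat[OF assms(2)] assms(1) by (simp add: fs_mat_def shifted_part_frob_pos)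

lemma fs_mat_frob_neg:
  assumes "frob_valid p q" "frob_len q \<le> N" "length q \<le> i" "i < N" "r < N"
  shows "fs_mat (frob_part p q) i r = mmult N dmat umat (sorted_list_of_set ({..<N} - set q) ! (i - length q)) r"
proof -
  define w where "w = sorted_list_of_set ({..<N} - set q) ! (i - length q)"
  have "fs_mat (frob_part p q) i r = hcoeff (a_upto (- 1 - int w)) (int r - int w)"
    unfolding fs_mat_def shifted_part_frob_neg[OF assms(1-4)] w_def by (simp add: algebra_simps)
  also have "\<dots> = mmult N dmat umat w r"
    using frob_complement_nth_less[OF assms(1-4)] assms(5) by (intro hcoeff_a_upto_neg) (simp_all add: w_def)
  finally show ?thesis
    by (simp add: w_def)
qed

lemma detN_cmat_minor:
  assumes "length ks = d" "length q = d"
  shows "detN d (\<lambda>i j. cmat (ks ! i) (q ! j)) =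
    (-1) ^ (sum_list ks + sum_list q) * lconst (detN d (\<lambda>i j. ccoef (q ! i) (ks ! j)))"
proof -
  have "detN d (\<lambda>i j. cmat (ks ! i) (q ! j)) =
      detN d (\<lambda>i j. (-1) ^ (ks ! i) * (-1) ^ (q ! j) * lconst (ccoef (q ! j) (ks ! i)))"
    by (simp add: cmat_def lconst.hom_mult lconst.hom_power lconst.hom_uminus power_add)
  also have "\<dots> = (\<Prod>i<d. (-1) ^ (ks ! i)) * (\<Prod>j<d. (-1) ^ (q ! j)) *
      detN d (\<lambda>i j. lconst (ccoef (q ! j) (ks ! i)))"
    by (rule detN_scale)
  also have "\<dots> = (-1) ^ (sum_list ks + sum_list q) * lconst (detN d (\<lambda>i j. ccoef (q ! i) (ks ! j)))"
    using assms by (simp add: power_add power_sum sum_list_sum_nth atLeast0LessThan lconst.hom_detN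
        detN_transpose[of d "\<lambda>i j. lconst (ccoef (q ! i) (ks ! j))"])
  finally show ?thesis .
qed

text \<open>If \<open>xs ! k > p ! k\<close>, then \<open>p ! a \<le> p ! k < xs ! k \<le> xs ! b\<close> for \<open>a \<ge> k \<ge> b\<close>, so the minor
  has a zero block of size \<open>(d - k) \<times> (k + 1)\<close>.\<close>

lemma detN_ccoef_eq_0:
  assumes "length xs = d" "length p = d" "sorted_wrt (>) xs" "sorted_wrt (>) p"
    and "\<not> list_all2 (\<le>) xs p"
  shows "detN d (\<lambda>i j. ccoef (p ! i) (xs ! j)) = 0"
proof -
  obtain k where k: "k < d" "p ! k < xs ! k"
    using assms(1,2,5) by (auto simp: list_all2_conv_all_nth not_le)
  show ?thesis
  proof (rule detN_zero_block[OF k(1)])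
    fix a b assume "k \<le> a" "a < d" "b \<le> k"
    then have "p ! a \<le> p ! k" "xs ! k \<le> xs ! b"
      using sorted_gt_nth_gap[OF assms(4), of k a] sorted_gt_nth_gap[OF assms(3), of b k] k(1) assms(1,2)
      by simp_all
    then show "ccoef (p ! a) (xs ! b) = 0"
      using k(2) by (simp add: ccoef_eq_0)
  qed
qed

context
  fixes N :: nat and Uinv :: "nat \<Rightarrow> nat \<Rightarrow> sym_fun"
  assumes umat_Uinv: "\<And>i j. i < N \<Longrightarrow> j < N \<Longrightarrow> mmult N umat Uinv i j = (if i = j then 1 else 0)"
begin

lemma detN_Uinv: "detN N Uinv = 1"
  by (rule detN_right_inverse_eq_1[OF detN_umat umat_Uinv])

lemma s_frob_eq_minor:
  assumes "xs \<in> dec_lists S d" "ks \<in> dec_lists {..<N} d"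
  shows "s_frob xs ks = (-1) ^ sum_list ks * detN d (\<lambda>i j. mmult N hrow Uinv (xs ! i) (ks ! j))"
proof -
  have lxs: "length xs = d" and lks: "length ks = d" and sks: "sorted_wrt (>) ks"
    and ksN: "set ks \<subseteq> {..<N}" and v: "frob_valid xs ks"
    using assms by (auto simp: dec_lists_def frob_valid_def)
  have FL: "frob_len ks \<le> N"
    using ksN by (rule frob_len_le)
  have "s_frob xs ks = detN N (jt_mat (frob_part xs ks))"
    using schur_stable[OF _ FL, of "frob_part xs ks"] frob_part_eq_0[OF v]
    by (simp add: s_frob_def schur_eq_detN_jt_mat)
  also have "\<dots> = (-1) ^ sum_list ks * detN d (\<lambda>i j. mmult N (jt_mat (frob_part xs ks)) Uinv i (ks ! j))"
  proof (rule detN_reduce_unit_rows[OF sks lks ksN detN_Uinv])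
    fix i l assume i: "d \<le> i" "i < N" and "l < N"
    define w where "w = sorted_list_of_set ({..<N} - set ks) ! (i - d)"
    have "mmult N (jt_mat (frob_part xs ks)) Uinv i l = mmult N umat Uinv w l"
      using jt_mat_frob_neg[OF v FL, of i] i lks by (simp add: mmult_def w_def)
    also have "\<dots> = (if w = l then 1 else 0)"
      using frob_complement_nth_less[OF v FL, of i] i lks \<open>l < N\<close> by (intro umat_Uinv) (simp_all add: w_def)
    finally show "mmult N (jt_mat (frob_part xs ks)) Uinv i l = (if l = w then 1 else 0)"
      by auto
  qed
  also have "detN d (\<lambda>i j. mmult N (jt_mat (frob_part xs ks)) Uinv i (ks ! j)) =
      detN d (\<lambda>i j. mmult N hrow Uinv (xs ! i) (ks ! j))"
    using lxs by (intro detN_cong) (simp add: mmult_def jt_mat_frob_pos)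
  finally show ?thesis .
qed

text \<open>Right multiplication by \<open>Uinv \<cdot> cmat\<close> turns the rows of \<open>fs_mat\<close> with index at least
  \<open>length p\<close> into unit vectors, because \<open>dmat \<cdot> cmat\<close> is the identity.\<close>

lemma FS_eq_minor:
  assumes "frob_valid p q" "\<And>i. i < length p \<Longrightarrow> p ! i \<le> K" "N = frob_len q"
  shows "FS p q = (-1) ^ sum_list q * detN (length p)
    (\<lambda>i j. \<Sum>x\<le>K. lconst (ccoef (p ! i) x) * mmult N (mmult N hrow Uinv) cmat x (q ! j))"
proof -
  define d where "d = length p"
  have sq: "sorted_wrt (>) q" and lq: "length q = d"
    using assms(1) by (auto simp: frob_valid_def d_def)
  have qN: "set q \<subseteq> {..<N}" and FL: "frob_len q \<le> N"
    using set_subset_frob_len[OF sq] assms(3) by auto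
  define Y where "Y = mmult N Uinv cmat"
  have "FS p q = detN N (fs_mat (frob_part p q))"
    by (simp add: FS_def schur_sh_a_half_eq_detN_fs_mat assms(3))
  also have "\<dots> = (-1) ^ sum_list q * detN d (\<lambda>i j. mmult N (fs_mat (frob_part p q)) Y i (q ! j))"
  proof (rule detN_reduce_unit_rows[OF sq lq qN])
    show "detN N Y = 1"
      by (simp add: Y_def detN_mmult detN_Uinv detN_cmat)
    fix i l assume i: "d \<le> i" "i < N" and "l < N"
    define w where "w = sorted_list_of_set ({..<N} - set q) ! (i - d)"
    have "w < N"
      using frob_complement_nth_less[OF assms(1) FL, of i] i lq by (simp add: w_def)
    have "mmult N (fs_mat (frob_part p q)) Y i l = (\<Sum>k<N. dmat w k * mmult N umat Y k l)"
      using fs_mat_frob_neg[OF assms(1) FL, of i] i lq by (intro mmult_row_comb) (simp add: mmult_def w_def)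
    also have "\<dots> = mmult N dmat cmat w l"
      unfolding Y_def by (simp add: mmult_def[of N dmat] mmult_inverse_cancel[OF umat_Uinv])
    also have "\<dots> = (if w = l then 1 else 0)"
      by (rule dmat_cmat[OF \<open>w < N\<close> \<open>l < N\<close>])
    finally show "mmult N (fs_mat (frob_part p q)) Y i l = (if l = w then 1 else 0)"
      by auto
  qed
  also have "detN d (\<lambda>i j. mmult N (fs_mat (frob_part p q)) Y i (q ! j)) =
      detN d (\<lambda>i j. \<Sum>x\<le>K. lconst (ccoef (p ! i) x) * mmult N (mmult N hrow Uinv) cmat x (q ! j))"
  proof (rule detN_cong)
    fix i j assume "i < d"
    then have "mmult N (fs_mat (frob_part p q)) Y i (q ! j) =
        (\<Sum>x\<le>K. lconst (ccoef (p ! i) x) * mmult N hrow Y x (q ! j))"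
      using assms(2) by (intro mmult_row_comb fs_mat_frob_pos) (simp_all add: d_def)
    then show "mmult N (fs_mat (frob_part p q)) Y i (q ! j) =
        (\<Sum>x\<le>K. lconst (ccoef (p ! i) x) * mmult N (mmult N hrow Uinv) cmat x (q ! j))"
      by (simp add: Y_def mmult_assoc)
  qed
  finally show ?thesis
    by (simp add: d_def)
qed

lemma minor_product_eq_s_frob:
  assumes "xs \<in> dec_lists S d" "ks \<in> dec_lists {..<N} d" "length q = d"
  shows "(-1) ^ sum_list q * (detN d (\<lambda>i j. lconst (ccoef (p ! i) (xs ! j))) *
      (detN d (\<lambda>i j. mmult N hrow Uinv (xs ! i) (ks ! j)) * detN d (\<lambda>i j. cmat (ks ! i) (q ! j)))) =
    lconst (detN d (\<lambda>i j. ccoef (p ! i) (xs ! j)) * detN d (\<lambda>i j. ccoef (q ! i) (ks ! j))) * s_frob xs ks"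
proof -
  have "length ks = d"
    using assms(2) by (simp add: dec_lists_def)
  then show ?thesis
    using s_frob_eq_minor[OF assms(1,2)] assms(3)
    by (simp add: detN_cmat_minor lconst.hom_mult lconst.hom_detN power_add mult_ac)
qed

end

lemma FS_expansion:
  assumes "frob_valid p q" "\<And>i. i < length p \<Longrightarrow> p ! i \<le> K"
  shows "FS p q = (\<Sum>xs\<in>dec_lists {..K} (length p). \<Sum>ks\<in>dec_lists {..<frob_len q} (length p).
      lconst (detN (length p) (\<lambda>i j. ccoef (p ! i) (xs ! j)) * detN (length p) (\<lambda>i j. ccoef (q ! i) (ks ! j))) *
      s_frob xs ks)"
proof -
  define d N where "d = length p" and "N = frob_len q"
  obtain Uinv where inv: "\<And>i j. i < N \<Longrightarrow> j < N \<Longrightarrow> mmult N umat Uinv i j = (if i = j then 1 else 0)"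
    using detN_right_inverse[OF detN_umat] by blast
  define Z where "Z = mmult N hrow Uinv"
  have lq: "length q = d"
    using assms(1) by (simp add: frob_valid_def d_def)
  have "FS p q = (-1) ^ sum_list q *
      detN d (\<lambda>i j. \<Sum>x\<le>K. lconst (ccoef (p ! i) x) * mmult N Z cmat x (q ! j))"
    using FS_eq_minor[OF inv assms N_def] by (simp add: d_def Z_def)
  also have "\<dots> = (-1) ^ sum_list q * (\<Sum>xs\<in>dec_lists {..K} d.
      detN d (\<lambda>i j. lconst (ccoef (p ! i) (xs ! j))) * detN d (\<lambda>i j. mmult N Z cmat (xs ! i) (q ! j)))"
    by (subst detN_Cauchy_Binet) simp_all
  also have "\<dots> = (-1) ^ sum_list q * (\<Sum>xs\<in>dec_lists {..K} d. \<Sum>ks\<in>dec_lists {..<N} d.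
      detN d (\<lambda>i j. lconst (ccoef (p ! i) (xs ! j))) *
      (detN d (\<lambda>i j. Z (xs ! i) (ks ! j)) * detN d (\<lambda>i j. cmat (ks ! i) (q ! j))))"
    by (simp add: mmult_def[of N Z] detN_Cauchy_Binet sum_distrib_left)
  also have "\<dots> = (\<Sum>xs\<in>dec_lists {..K} d. \<Sum>ks\<in>dec_lists {..<N} d.
      lconst (detN d (\<lambda>i j. ccoef (p ! i) (xs ! j)) * detN d (\<lambda>i j. ccoef (q ! i) (ks ! j))) * s_frob xs ks)"
    unfolding sum_distrib_left Z_def using lq by (intro sum.cong refl minor_product_eq_s_frob[OF inv])
  finally show ?thesis
    by (simp add: d_def N_def)
qed

lemma ccoef_minors_eq_0:
  assumes "frob_valid p q" "xs \<in> dec_lists S (length p)" "ks \<in> dec_lists T (length p)"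
    and "\<not> (list_all2 (\<le>) xs p \<and> list_all2 (\<le>) ks q)"
  shows "detN (length p) (\<lambda>i j. ccoef (p ! i) (xs ! j)) * detN (length p) (\<lambda>i j. ccoef (q ! i) (ks ! j)) = 0"
proof -
  have xs: "length xs = length p" "sorted_wrt (>) xs" and ks: "length ks = length p" "sorted_wrt (>) ks"
    using assms(2,3) by (simp_all add: dec_lists_def)
  have sp: "sorted_wrt (>) p" and sq: "sorted_wrt (>) q" and lq: "length q = length p"
    using assms(1) by (simp_all add: frob_valid_def)
  consider "\<not> list_all2 (\<le>) xs p" | "\<not> list_all2 (\<le>) ks q"
    using assms(4) by blast
  then show ?thesis
  proof cases
    case 1
    then show ?thesis
      using detN_ccoef_eq_0[OF xs(1) refl xs(2) sp] by simp
  next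
    case 2
    then show ?thesis
      using detN_ccoef_eq_0[OF ks(1) lq ks(2) sq] by simp
  qed
qed

lemma list_all2_le_set_bound:
  assumes "list_all2 (\<le>) xs ys" "x \<in> set xs"
  obtains y where "y \<in> set ys" "x \<le> y"
proof -
  obtain i where "i < length xs" "x = xs ! i"
    using assms(2) by (auto simp: in_set_conv_nth)
  with assms(1) show ?thesis
    using that[of "ys ! i"] by (auto simp: list_all2_conv_all_nth)
qed

lemma frob_dominated_eq_dec_lists:
  assumes "frob_valid p q"
  shows "{(p', q'). frob_valid p' q' \<and> length p' = length p \<and> list_all2 (\<le>) p' p \<and> list_all2 (\<le>) q' q} =
    {(xs, ks) \<in> dec_lists {..p ! 0} (length p) \<times> dec_lists {..<frob_len q} (length p).
      list_all2 (\<le>) xs p \<and> list_all2 (\<le>) ks q}"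
proof -
  have sp: "sorted_wrt (>) p" and sq: "sorted_wrt (>) q" and lq: "length q = length p"
    using assms by (auto simp: frob_valid_def)
  have "set p \<subseteq> {..p ! 0}"
    using sorted_gt_nth_gap[OF sp, of 0] by (fastforce simp: in_set_conv_nth)
  have xs_bound: "set xs \<subseteq> {..p ! 0}" if le: "list_all2 (\<le>) xs p" for xs
  proof
    fix x assume "x \<in> set xs"
    then obtain y where "y \<in> set p" "x \<le> y"
      by (rule list_all2_le_set_bound[OF le])
    with \<open>set p \<subseteq> {..p ! 0}\<close> show "x \<in> {..p ! 0}"
      by auto
  qed
  have ks_bound: "set ks \<subseteq> {..<frob_len q}" if le: "list_all2 (\<le>) ks q" for ks
  proof
    fix x assume "x \<in> set ks"
    then obtain y where "y \<in> set q" "x \<le> y"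
      by (rule list_all2_le_set_bound[OF le])
    with set_subset_frob_len[OF sq] show "x \<in> {..<frob_len q}"
      by auto
  qed
  show ?thesis
    using xs_bound ks_bound lq by (auto simp: dec_lists_def frob_valid_def)
qed

theorem theorem9:
  fixes p q :: "nat list"
  assumes "frob_valid p q"
  shows "FS p q =
    (\<Sum>(p', q') \<in> {(p', q'). frob_valid p' q' \<and> length p' = length p
                     \<and> list_all2 (\<le>) p' p \<and> list_all2 (\<le>) q' q}.
       lconst (detN (length p) (\<lambda>i j. ccoef (p ! i) (p' ! j))
             * detN (length p) (\<lambda>i j. ccoef (q ! i) (q' ! j)))
       * s_frob p' q')"
proof -
  let ?g = "\<lambda>(p', q'). lconst (detN (length p) (\<lambda>i j. ccoef (p ! i) (p' ! j))
             * detN (length p) (\<lambda>i j. ccoef (q ! i) (q' ! j))) * s_frob p' q'"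
  let ?D = "dec_lists {..p ! 0} (length p) \<times> dec_lists {..<frob_len q} (length p)"
  have p0: "p ! i \<le> p ! 0" if "i < length p" for i
    using sorted_gt_nth_gap[of p 0 i] assms that by (simp add: frob_valid_def)
  have "FS p q = (\<Sum>z\<in>?D. ?g z)"
    using FS_expansion[OF assms p0] by (simp add: sum.cartesian_product)
  also have "\<dots> = (\<Sum>z\<in>{(xs, ks) \<in> ?D. list_all2 (\<le>) xs p \<and> list_all2 (\<le>) ks q}. ?g z)"
  proof (rule sum.mono_neutral_right)
    show "\<forall>z\<in>?D - {(xs, ks) \<in> ?D. list_all2 (\<le>) xs p \<and> list_all2 (\<le>) ks q}. ?g z = 0"
    proof
      fix z assume "z \<in> ?D - {(xs, ks) \<in> ?D. list_all2 (\<le>) xs p \<and> list_all2 (\<le>) ks q}"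
      then obtain xs ks where z: "z = (xs, ks)" and xs_ks: "xs \<in> dec_lists {..p ! 0} (length p)"
        "ks \<in> dec_lists {..<frob_len q} (length p)" "\<not> (list_all2 (\<le>) xs p \<and> list_all2 (\<le>) ks q)"
        by auto
      from ccoef_minors_eq_0[OF assms xs_ks] show "?g z = 0"
        by (simp add: z del: mult_eq_0_iff)
    qed
  qed (auto simp: finite_dec_lists)
  finally show ?thesis
    by (simp only: frob_dominated_eq_dec_lists[OF assms])
qed

end
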